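(* Let $A\in {\operatorname{\mathsf{TPD}}}_n(\mathbb{S}_{\max}^\vee)$, with $\gamma_i=a_{ii}$ for $i\in[n]$ ordered so that $\gamma_1\succeq\gamma_2\succeq\cdots\succeq\gamma_n$, and $B_k=\gamma_k I\ominus A$. Assume that $\gamma=\gamma_1$ is simple as an algebraic $\mathbb{S}_{\max}$-eigenvalue of $A$, that is $\gamma_1\succ \gamma_2$. Then, we have \[ v^{(1)}=(\gamma I \ominus A )^{\mathrm{adj}}_{:,1}=\gamma^{n-1} (\gamma^{-1}A)^*_{:,1}\enspace .\] Moreover $A v^{(1)}= \gamma v^{(1)}$. In particular, when $v^{(1)} \in (\mathbb{S}_{\max}^\vee)^n$, $v^{(1)}$ is the unique leading $\mathbb{S}_{\max}$-eigenvector (up to a multiplicative constant), and this is a strong $\mathbb{S}_{\max}$-eigenvector.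
   Context: $\mathbb{S}_{\max}$ is the symmetrized tropical semiring over a divisible totally ordered abelian group, with zero $\mathbf{0}$, unit $\mathbf{1}$, minus $\ominus$; $\mathbb{S}_{\max}^\vee$ is the set of signed elements (positive, negative or $\mathbf{0}$), and $a\,\nabla\, b$ iff $a\ominus b$ is balanced. $a\preceq b$ iff $b=a\oplus b$, and $a\prec b$ iff $a\preceq b$, $a\neq b$. $A\in{\operatorname{\mathsf{TPD}}}_n(\mathbb{S}_{\max}^\vee)$: $A$ symmetric with signed entries, $\mathbf{0}<a_{ii}$ and $a_{ij}^2<a_{ii}a_{jj}$ for $i\ne j$ (where $a<b$ iff $b\ominus a$ is positive). $\det$ is the signed determinant and $(M^{\mathrm{adj}})_{ij}=(\ominus\mathbf{1})^{i+j}\det M[\hat j,\hat i]$; $M_{:,j}$ is the $j$-th column. The Kleene star is $M^*=\bigoplus_{k\ge0}M^k$ (with $M^0=I$). An $\mathbb{S}_{\max}$-eigenvector for the eigenvalue $\gamma$ is a $v\in(\mathbb{S}_{\max}^\vee)^n\setminus\{\mathbf{0}\}$ with $Av\,\nabla\,\gamma v$; it is strong if $Av=\gamma v$; a leading eigenvector is one associated with the largest eigenvalue $\gamma_1$. The $\mathbb{S}_{\max}$-eigenvalues of $A$ are its diagonal entries. *)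

theory Defs
  imports Main "HOL-Combinatorics.Permutations"
begin

text \<open>The tropical (max-plus) convention: the value group 'g is written additively,
  tropical multiplication is the group addition, tropical addition is max.
  Elements of S_max: zero (i.e. -infinity), positive g, negative (ominus g), balanced g.\<close>

datatype 'g smax = SZero | Pos 'g | Neg 'g | Bal 'g

fun smod :: "'g::linordered_ab_group_add smax \<Rightarrow> 'g" where
  "smod SZero = 0" | "smod (Pos g) = g" | "smod (Neg g) = g" | "smod (Bal g) = g"

fun splus :: "'g::linordered_ab_group_add smax \<Rightarrow> 'g smax \<Rightarrow> 'g smax" where
  "splus SZero b = b"
| "splus a SZero = a"
| "splus a b = (if smod b < smod a then a else if smod a < smod b then b
                 else if a = b then a else Bal (smod a))"

fun stimes :: "'g::linordered_ab_group_add smax \<Rightarrow> 'g smax \<Rightarrow> 'g smax" where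
  "stimes SZero b = SZero"
| "stimes a SZero = SZero"
| "stimes (Pos a) (Pos b) = Pos (a + b)"
| "stimes (Pos a) (Neg b) = Neg (a + b)"
| "stimes (Neg a) (Pos b) = Neg (a + b)"
| "stimes (Neg a) (Neg b) = Pos (a + b)"
| "stimes (Bal a) b = Bal (a + smod b)"
| "stimes a (Bal b) = Bal (smod a + b)"

fun sminus :: "'g smax \<Rightarrow> 'g smax" where
  "sminus SZero = SZero" | "sminus (Pos g) = Neg g" | "sminus (Neg g) = Pos g"
| "sminus (Bal g) = Bal g"

fun sinv :: "'g::linordered_ab_group_add smax \<Rightarrow> 'g smax" where
  "sinv SZero = SZero" | "sinv (Pos g) = Pos (- g)" | "sinv (Neg g) = Neg (- g)"
| "sinv (Bal g) = Bal (- g)"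

instantiation smax :: (linordered_ab_group_add) comm_monoid_add
begin
definition zero_smax_def: "0 = SZero"
definition plus_smax_def: "a + b = splus a b"
instance
proof
  fix a b c :: "'a smax"
  show "a + b + c = a + (b + c)" unfolding plus_smax_def
    by (cases a; cases b; cases c) auto
  show "a + b = b + a" unfolding plus_smax_def
    by (cases a; cases b) auto
  show "0 + a = a" unfolding plus_smax_def zero_smax_def by simp
qed
end

instantiation smax :: (linordered_ab_group_add) comm_monoid_mult
begin
definition one_smax_def: "1 = Pos 0"
definition times_smax_def: "a * b = stimes a b"
instance
proof
  fix a b c :: "'a smax"
  show "a * b * c = a * (b * c)" unfolding times_smax_def
    by (cases a; cases b; cases c) (auto simp: add.assoc)
  show "a * b = b * a" unfolding times_smax_def
    by (cases a; cases b) (auto simp: add.commute)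
  show "1 * a = a" unfolding times_smax_def one_smax_def by (cases a) auto
qed
end

definition signed :: "'g smax \<Rightarrow> bool" where
  "signed a \<longleftrightarrow> (\<forall>g. a \<noteq> Bal g)"

definition balanced :: "'g smax \<Rightarrow> bool" where
  "balanced a \<longleftrightarrow> sminus a = a"

definition positive :: "'g smax \<Rightarrow> bool" where
  "positive a \<longleftrightarrow> (\<exists>g. a = Pos g)"

definition nabla :: "'g::linordered_ab_group_add smax \<Rightarrow> 'g smax \<Rightarrow> bool" where
  "nabla a b \<longleftrightarrow> balanced (a + sminus b)"

definition sless :: "'g::linordered_ab_group_add smax \<Rightarrow> 'g smax \<Rightarrow> bool" where
  "sless a b \<longleftrightarrow> positive (b + sminus a)"

definition spreceq :: "'g::linordered_ab_group_add smax \<Rightarrow> 'g smax \<Rightarrow> bool" where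
  "spreceq a b \<longleftrightarrow> b = a + b"

definition sprec :: "'g::linordered_ab_group_add smax \<Rightarrow> 'g smax \<Rightarrow> bool" where
  "sprec a b \<longleftrightarrow> spreceq a b \<and> a \<noteq> b"

section \<open>Matrices and vectors of size n (indices 0..n-1)\<close>

type_synonym 'g smat = "nat \<Rightarrow> nat \<Rightarrow> 'g smax"
type_synonym 'g svec = "nat \<Rightarrow> 'g smax"

definition TPD :: "nat \<Rightarrow> 'g::linordered_ab_group_add smat \<Rightarrow> bool" where
  "TPD n A \<longleftrightarrow>
     (\<forall>i<n. \<forall>j<n. A i j = A j i) \<and>
     (\<forall>i<n. \<forall>j<n. signed (A i j)) \<and>
     (\<forall>i<n. sless 0 (A i i)) \<and>
     (\<forall>i<n. \<forall>j<n. i \<noteq> j \<longrightarrow> sless ((A i j)^2) (A i i * A j j))"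

definition smat_id :: "'g::linordered_ab_group_add smat" where
  "smat_id i j = (if i = j then 1 else 0)"

definition smat_scale :: "'g::linordered_ab_group_add smax \<Rightarrow> 'g smat \<Rightarrow> 'g smat" where
  "smat_scale c M i j = c * M i j"

definition smat_minus :: "'g::linordered_ab_group_add smat \<Rightarrow> 'g smat \<Rightarrow> 'g smat" where
  "smat_minus M N i j = M i j + sminus (N i j)"

definition smat_mult :: "nat \<Rightarrow> 'g::linordered_ab_group_add smat \<Rightarrow> 'g smat \<Rightarrow> 'g smat" where
  "smat_mult n M N i j = (\<Sum>k<n. M i k * N k j)"

definition smat_vec :: "nat \<Rightarrow> 'g::linordered_ab_group_add smat \<Rightarrow> 'g svec \<Rightarrow> 'g svec" where
  "smat_vec n M v i = (\<Sum>j<n. M i j * v j)"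

fun smat_pow :: "nat \<Rightarrow> 'g::linordered_ab_group_add smat \<Rightarrow> nat \<Rightarrow> 'g smat" where
  "smat_pow n M 0 = smat_id"
| "smat_pow n M (Suc k) = smat_mult n (smat_pow n M k) M"

text \<open>Partial sums of the Kleene star series, and the Kleene star as the eventual value
  of these partial sums (the series converges iff its partial sums are eventually constant).\<close>
definition kleene_partial :: "nat \<Rightarrow> 'g::linordered_ab_group_add smat \<Rightarrow> nat \<Rightarrow> 'g smat" where
  "kleene_partial n M K i j = (\<Sum>k\<le>K. smat_pow n M k i j)"

definition kleene_converges :: "nat \<Rightarrow> 'g::linordered_ab_group_add smat \<Rightarrow> bool" where
  "kleene_converges n M \<longleftrightarrow> (\<exists>S K0. \<forall>K\<ge>K0. \<forall>i<n. \<forall>j<n. kleene_partial n M K i j = S i j)"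

definition kleene_star :: "nat \<Rightarrow> 'g::linordered_ab_group_add smat \<Rightarrow> 'g smat" where
  "kleene_star n M = (\<lambda>i j. THE s. \<exists>K0. \<forall>K\<ge>K0. kleene_partial n M K i j = s)"

definition ssign :: "(nat \<Rightarrow> nat) \<Rightarrow> 'g::linordered_ab_group_add smax" where
  "ssign \<sigma> = (if evenperm \<sigma> then 1 else sminus 1)"

definition sdet :: "nat \<Rightarrow> 'g::linordered_ab_group_add smat \<Rightarrow> 'g smax" where
  "sdet n M = (\<Sum>\<sigma> | \<sigma> permutes {..<n}. ssign \<sigma> * (\<Prod>i<n. M i (\<sigma> i)))"

definition skip :: "nat \<Rightarrow> nat \<Rightarrow> nat" where
  "skip r k = (if k < r then k else Suc k)"

definition minor :: "'g smat \<Rightarrow> nat \<Rightarrow> nat \<Rightarrow> 'g smat" where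
  "minor M r c = (\<lambda>k l. M (skip r k) (skip c l))"

definition sadj :: "nat \<Rightarrow> 'g::linordered_ab_group_add smat \<Rightarrow> 'g smat" where
  "sadj n M i j = (sminus 1) ^ (i + j) * sdet (n - 1) (minor M j i)"

definition is_svec :: "nat \<Rightarrow> 'g::linordered_ab_group_add svec \<Rightarrow> bool" where
  "is_svec n v \<longleftrightarrow> (\<forall>i<n. signed (v i)) \<and> (\<exists>i<n. v i \<noteq> 0)"

definition is_eigenvector :: "nat \<Rightarrow> 'g::linordered_ab_group_add smat \<Rightarrow> 'g smax \<Rightarrow> 'g svec \<Rightarrow> bool" where
  "is_eigenvector n A \<gamma> v \<longleftrightarrow> is_svec n v \<and> (\<forall>i<n. nabla (smat_vec n A v i) (\<gamma> * v i))"

definition is_strong_eigenvector :: "nat \<Rightarrow> 'g::linordered_ab_group_add smat \<Rightarrow> 'g smax \<Rightarrow> 'g svec \<Rightarrow> bool" where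
  "is_strong_eigenvector n A \<gamma> v \<longleftrightarrow> is_svec n v \<and> (\<forall>i<n. smat_vec n A v i = \<gamma> * v i)"

end

theory Submission
  imports Defs
begin

text \<open>Dividing by \<open>\<gamma>\<close> turns \<open>A\<close> into a matrix \<open>M\<close> with \<open>M 0 0 = \<one>\<close> and all other
  entries of modulus \<open>< \<one>\<close>: the other diagonal entries by simplicity of \<open>\<gamma>\<close>, the off-diagonal
  ones by total positive definiteness. Every cycle of \<open>M\<close> then has weight \<open>\<one>\<close> or modulus
  \<open>< \<one>\<close>, so the Kleene star \<open>M\<^sup>*\<close> is reached after \<open>n - 1\<close> terms and its first column
  \<open>x\<close> solves \<open>x = M x\<close>. Because the rows \<open>i \<ge> 1\<close> of \<open>M\<close> are contracting, a solution of
  \<open>x = M x\<close> on these rows, and even a signed solution of \<open>x \<nabla> M x\<close>, is determined by \<open>x 0\<close>;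
  this gives uniqueness of the eigenvector. On the determinantal side, expanding the cofactors
  of \<open>\<gamma>I \<ominus> A\<close> along row \<open>0\<close> expresses \<open>v1\<close> as \<open>\<gamma> ^ (n - 1)\<close> times the total
  weights of the simple paths to \<open>0\<close>; these solve the same fixpoint equation, hence form the
  first column of \<open>M\<^sup>*\<close>.\<close>

section \<open>The semiring \<open>\<bbbS>\<^sub>m\<^sub>a\<^sub>x\<close> and comparison of moduli\<close>

instance smax :: (linordered_ab_group_add) "{comm_semiring_1, semiring_1_no_zero_divisors}"
proof
  fix a b c :: "'a smax"
  show "(a + b) * c = a * c + b * c" unfolding plus_smax_def times_smax_def
    by (cases a; cases b; cases c) (auto simp: add.commute)
  show "a * (b + c) = a * b + a * c" unfolding plus_smax_def times_smax_def
    by (cases a; cases b; cases c) (auto simp: add.commute)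
  show "0 * a = 0" unfolding times_smax_def zero_smax_def by simp
  show "a * 0 = 0" unfolding times_smax_def zero_smax_def by (cases a) auto
  show "(0::'a smax) \<noteq> 1" unfolding zero_smax_def one_smax_def by simp
  show "a \<noteq> 0 \<Longrightarrow> b \<noteq> 0 \<Longrightarrow> a * b \<noteq> 0" unfolding times_smax_def zero_smax_def
    by (cases a; cases b) auto
qed

lemmas smax_defs = plus_smax_def times_smax_def zero_smax_def one_smax_def

lemma smax_add_idem [simp]: "(a::'g::linordered_ab_group_add smax) + a = a"
  unfolding smax_defs by (cases a) auto

lemma Pos_mult_Pos [simp]: "Pos a * Pos b = Pos (a + b)"
  by (simp add: times_smax_def)

lemma Pos_neq_0 [simp]: "Pos a \<noteq> 0"
  by (simp add: zero_smax_def)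

lemma Pos_0_eq_1: "Pos 0 = 1"
  by (simp add: one_smax_def)

lemma power_Pos: "Pos a ^ k = Pos (\<Sum>_<k. a)"
  by (induction k) (simp_all add: Pos_0_eq_1 add.commute)

lemma smod_mult:
  "(a::'g::linordered_ab_group_add smax) \<noteq> 0 \<Longrightarrow> b \<noteq> 0 \<Longrightarrow> smod (a * b) = smod a + smod b"
  unfolding smax_defs by (cases a; cases b) auto

text \<open>The modulus of \<open>\<zero>\<close> is \<open>-\<infinity>\<close>; the value \<open>smod 0 = 0\<close> is junk,
  hence the separate case for \<open>0\<close>.\<close>

definition mod_le :: "'g::linordered_ab_group_add smax \<Rightarrow> 'g smax \<Rightarrow> bool" where
  "mod_le a b \<longleftrightarrow> a = 0 \<or> (b \<noteq> 0 \<and> smod a \<le> smod b)"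

definition mod_less :: "'g::linordered_ab_group_add smax \<Rightarrow> 'g smax \<Rightarrow> bool" where
  "mod_less a b \<longleftrightarrow> a = 0 \<or> (b \<noteq> 0 \<and> smod a < smod b)"

lemma mod_le_refl [simp]: "mod_le a a"
  and mod_le_0_left [simp]: "mod_le 0 a"
  and mod_less_0_left [simp]: "mod_less 0 a"
  and mod_le_0_right [simp]: "mod_le a 0 \<longleftrightarrow> a = 0"
  by (auto simp: mod_le_def mod_less_def)

lemma mod_le_trans [trans]: "mod_le a b \<Longrightarrow> mod_le b c \<Longrightarrow> mod_le a c"
  and mod_le_less_trans [trans]: "mod_le a b \<Longrightarrow> mod_less b c \<Longrightarrow> mod_less a c"
  and mod_less_le_trans [trans]: "mod_less a b \<Longrightarrow> mod_le b c \<Longrightarrow> mod_less a c"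
  and mod_less_imp_le: "mod_less a b \<Longrightarrow> mod_le a b"
  and mod_le_total: "mod_le a b \<or> mod_le b a"
  and mod_less_not_le: "mod_less a b \<Longrightarrow> a \<noteq> 0 \<Longrightarrow> \<not> mod_le b a"
  by (auto simp: mod_le_def mod_less_def)

lemma mod_le_add_left: "mod_le a (a + (b::'g::linordered_ab_group_add smax))"
  and mod_le_add_right: "mod_le b (a + (b::'g::linordered_ab_group_add smax))"
  unfolding mod_le_def smax_defs by (cases a; cases b; auto)+

lemma smod_add_cases: "(a::'g::linordered_ab_group_add smax) + b \<noteq> 0 \<Longrightarrow>
   (a \<noteq> 0 \<and> smod (a + b) = smod a) \<or> (b \<noteq> 0 \<and> smod (a + b) = smod b)"
  unfolding smax_defs by (cases a; cases b) auto

lemma mod_le_add_iff: "mod_le (a + b) (c::'g::linordered_ab_group_add smax) \<longleftrightarrow> mod_le a c \<and> mod_le b c"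
proof
  assume "mod_le (a + b) c"
  then show "mod_le a c \<and> mod_le b c"
    using mod_le_add_left mod_le_add_right mod_le_trans by blast
next
  assume "mod_le a c \<and> mod_le b c"
  then show "mod_le (a + b) c"
    using smod_add_cases[of a b] unfolding mod_le_def by auto
qed

lemma mod_less_add: "mod_less a c \<Longrightarrow> mod_less b c \<Longrightarrow> mod_less (a + b) (c::'g::linordered_ab_group_add smax)"
  unfolding mod_less_def smax_defs by (cases a; cases b; cases c) (auto split: if_splits)

lemma mod_le_addD:
  "mod_le a (b + (c::'g::linordered_ab_group_add smax)) \<Longrightarrow> a \<noteq> 0 \<Longrightarrow> mod_le a b \<or> mod_le a c"
  unfolding mod_le_def smax_defs by (cases a; cases b; cases c) (auto split: if_splits)

lemma mod_le_mult: "mod_le a b \<Longrightarrow> mod_le c d \<Longrightarrow> mod_le (a * c) (b * (d::'g::linordered_ab_group_add smax))"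
  unfolding mod_le_def by (auto simp: smod_mult add_mono)

lemma mod_less_mult: "mod_less a b \<Longrightarrow> mod_le c d \<Longrightarrow> mod_less (a * c) (b * (d::'g::linordered_ab_group_add smax))"
  unfolding mod_le_def mod_less_def by (auto simp: smod_mult add_less_le_mono)

lemma mod_le_mult_1: "mod_le a 1 \<Longrightarrow> mod_le (a * c) (c::'g::linordered_ab_group_add smax)"
  using mod_le_mult[of a 1 c c] by simp

lemma mod_less_mult_1: "mod_less a 1 \<Longrightarrow> mod_less (a * c) (c::'g::linordered_ab_group_add smax)"
  using mod_less_mult[of a 1 c c] by simp

lemma mod_less_absorb: "mod_less b a \<Longrightarrow> a + b = (a::'g::linordered_ab_group_add smax)"
  unfolding mod_less_def smax_defs by (cases a; cases b) auto

lemma absorb_imp_mod_le: "a + b = (a::'g::linordered_ab_group_add smax) \<Longrightarrow> mod_le b a"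
  unfolding mod_le_def smax_defs by (cases a; cases b) (auto split: if_splits)

lemma add_mod_less_cancel: "a = b + c \<Longrightarrow> mod_less c a \<Longrightarrow> a = (b::'g::linordered_ab_group_add smax)"
  unfolding mod_less_def smax_defs by (cases b; cases c) (auto split: if_splits)

lemma mod_le_sum: "finite S \<Longrightarrow> x \<in> S \<Longrightarrow> mod_le (f x) (sum f S)"
proof (induction S rule: finite_induct)
  case (insert y S)
  then show ?case using mod_le_add_left mod_le_add_right mod_le_trans by auto blast
qed simp

lemma sum_mod_le: "(\<And>x. x \<in> S \<Longrightarrow> mod_le (f x) c) \<Longrightarrow> mod_le (sum f S) c"
  by (induction S rule: infinite_finite_induct) (simp_all add: mod_le_add_iff)

lemma sum_mod_less: "(\<And>x. x \<in> S \<Longrightarrow> mod_less (f x) c) \<Longrightarrow> mod_less (sum f S) c"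
  by (induction S rule: infinite_finite_induct) (simp_all add: mod_less_add)

lemma mod_le_sumD: "mod_le a (sum f S) \<Longrightarrow> a \<noteq> 0 \<Longrightarrow> \<exists>x\<in>S. mod_le a (f x)"
proof (induction S rule: infinite_finite_induct)
  case (insert y S)
  then show ?case using mod_le_addD by fastforce
qed simp_all

lemma add_sum_absorb:
  "(\<And>x. x \<in> S \<Longrightarrow> a + f x = a) \<Longrightarrow> a + sum f S = (a::'g::linordered_ab_group_add smax)"
proof (induction S rule: infinite_finite_induct)
  case (insert y S)
  have "a + sum f (insert y S) = (a + f y) + sum f S"
    using insert.hyps by (simp add: ac_simps)
  also have "\<dots> = a" using insert by simp
  finally show ?case .
qed simp_all

lemma sum_add_summand:
  assumes "finite S" "x \<in> S"
  shows "sum f S + f x = (sum f S :: 'g::linordered_ab_group_add smax)"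
proof -
  have "sum f S = f x + sum f (S - {x})" by (rule sum.remove[OF assms])
  then show ?thesis by (metis add.assoc add.commute smax_add_idem)
qed

lemma sum_eq_absorbing:
  assumes "finite S" "x \<in> S" "f x = a" "\<And>y. y \<in> S \<Longrightarrow> a + f y = a"
  shows "sum f S = (a::'g::linordered_ab_group_add smax)"
proof -
  have "sum f S = a + sum f S" using sum_add_summand[OF assms(1,2), of f] assms(3) by (simp add: add.commute)
  also have "\<dots> = a" by (rule add_sum_absorb[OF assms(4)])
  finally show ?thesis .
qed

lemma ex_mod_le_max: "finite S \<Longrightarrow> S \<noteq> {} \<Longrightarrow> \<exists>i\<in>S. \<forall>j\<in>S. mod_le (f j) (f i)"
proof (induction S rule: finite_ne_induct)
  case (insert x F)
  then obtain i where i: "i \<in> F" "\<forall>j\<in>F. mod_le (f j) (f i)" by blast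
  show ?case
  proof (cases "mod_le (f x) (f i)")
    case True
    then show ?thesis using i by auto
  next
    case False
    then show ?thesis using i mod_le_total mod_le_trans by (metis insert_iff mod_le_refl)
  qed
qed simp

lemma prod_mod_le: "(\<And>r. r \<in> U \<Longrightarrow> mod_le (f r) (g r)) \<Longrightarrow> mod_le (prod f U) (prod g U)"
  by (induction U rule: infinite_finite_induct) (simp_all add: mod_le_mult)

lemma prod_mod_less:
  assumes "finite U" "r \<in> U" "mod_less (f r) (g r)" "\<And>s. s \<in> U \<Longrightarrow> mod_le (f s) (g s)"
  shows "mod_less (prod f U) (prod g U :: 'g::linordered_ab_group_add smax)"
  using mod_less_mult[OF assms(3) prod_mod_le[of "U - {r}" f g]] assms
  by (simp add: prod.remove)

lemma sminus_sminus [simp]: "sminus (sminus a) = a"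
  by (cases a) auto

lemma sminus_add: "sminus (a + b) = sminus a + sminus (b::'g::linordered_ab_group_add smax)"
  and sminus_mult_left: "sminus (a * b) = sminus a * (b::'g::linordered_ab_group_add smax)"
  and sminus_mult_right: "sminus (a * b) = a * sminus (b::'g::linordered_ab_group_add smax)"
  unfolding smax_defs by (cases a; cases b; auto)+

lemma sminus_mult_sminus: "sminus a * sminus b = a * (b::'g::linordered_ab_group_add smax)"
  by (simp flip: sminus_mult_left sminus_mult_right)

lemma power_sminus_1: "sminus 1 ^ i = (if even i then 1 else sminus (1::'g::linordered_ab_group_add smax))"
  by (induction i) (auto simp: smax_defs)

lemma mod_less_sminus_iff: "mod_less (sminus a) b \<longleftrightarrow> mod_less a (b::'g::linordered_ab_group_add smax)"
  unfolding mod_less_def by (cases a) (auto simp: smax_defs)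

lemma nabla_refl: "nabla a (a::'g::linordered_ab_group_add smax)"
  unfolding nabla_def balanced_def by (simp add: sminus_add add.commute)

lemma nabla_sym: "nabla a b \<Longrightarrow> nabla b (a::'g::linordered_ab_group_add smax)"
  unfolding nabla_def balanced_def by (metis add.commute sminus_add sminus_sminus)

lemma nabla_mult: "nabla a b \<Longrightarrow> nabla (c * a) (c * (b::'g::linordered_ab_group_add smax))"
  unfolding nabla_def balanced_def by (metis distrib_left sminus_mult_right)

lemma signed_nabla_mod_le:
  "signed a \<Longrightarrow> a \<noteq> 0 \<Longrightarrow> nabla a b \<Longrightarrow> mod_le a (b::'g::linordered_ab_group_add smax)"
  unfolding nabla_def balanced_def signed_def mod_le_def smax_defs
  by (cases a; cases b) (auto split: if_splits)

lemma signed_nabla_eq: "signed a \<Longrightarrow> signed b \<Longrightarrow> nabla a b \<Longrightarrow> a = (b::'g::linordered_ab_group_add smax)"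
  unfolding nabla_def balanced_def signed_def smax_defs
  by (cases a; cases b) (auto split: if_splits)

lemma signed_mult: "signed a \<Longrightarrow> signed b \<Longrightarrow> signed (a * (b::'g::linordered_ab_group_add smax))"
  unfolding signed_def smax_defs by (cases a; cases b) auto

lemma signed_Pos [simp]: "signed (Pos g)"
  by (simp add: signed_def)

lemma signed_Pos_mult_iff: "signed (Pos g * b) \<longleftrightarrow> signed (b::'g::linordered_ab_group_add smax)"
  unfolding signed_def smax_defs by (cases b) auto

section \<open>The Kleene star of a matrix with a dominant corner entry\<close>

fun walk_weight :: "'g::linordered_ab_group_add smat \<Rightarrow> nat list \<Rightarrow> 'g smax" where
  "walk_weight M (x # y # zs) = M x y * walk_weight M (y # zs)"
| "walk_weight M _ = 1"

definition walks :: "nat \<Rightarrow> nat \<Rightarrow> nat \<Rightarrow> nat \<Rightarrow> nat list set" where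
  "walks n k i j = {xs. length xs = Suc k \<and> set xs \<subseteq> {..<n} \<and> hd xs = i \<and> last xs = j}"

lemma finite_lists_length_lessThan: "finite {xs. set xs \<subseteq> {..<n::nat} \<and> length xs = k}"
  by (rule finite_lists_length_eq) (rule finite_lessThan)

lemma finite_walks: "finite (walks n k i j)"
  by (rule finite_subset[OF _ finite_lists_length_lessThan[of n "Suc k"]]) (auto simp: walks_def)

lemma walk_weight_snoc: "xs \<noteq> [] \<Longrightarrow> walk_weight M (xs @ [j]) = walk_weight M xs * M (last xs) j"
proof (induction xs)
  case (Cons a xs)
  then show ?case by (cases xs) (simp_all add: mult.assoc)
qed simp

lemma walk_weight_append:
  "walk_weight M (xs @ y # zs) = walk_weight M (xs @ [y]) * walk_weight M (y # zs)"
proof (induction xs)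
  case (Cons a xs)
  then show ?case by (cases xs) (auto simp: mult.assoc)
qed simp

lemma walks_0: "walks n 0 i j = (if i = j \<and> i < n then {[i]} else {})"
  unfolding walks_def by (auto simp: length_Suc_conv)

lemma walks_Suc:
  "walks n (Suc k) i j =
     (if j < n then (\<lambda>xs. xs @ [j]) ` {xs. length xs = Suc k \<and> set xs \<subseteq> {..<n} \<and> hd xs = i} else {})"
    (is "_ = (if _ then (\<lambda>xs. xs @ [j]) ` ?W else {})")
proof (cases "j < n")
  case True
  have "ys \<in> (\<lambda>xs. xs @ [j]) ` ?W" if ys: "ys \<in> walks n (Suc k) i j" for ys
  proof -
    have "ys \<noteq> []" using ys by (auto simp: walks_def)
    then have ys_eq: "ys = butlast ys @ [j]"
      using ys unfolding walks_def by (metis (mono_tags, lifting) append_butlast_last_id mem_Collect_eq)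
    moreover have "butlast ys \<in> ?W"
    proof -
      have "length (butlast ys) = Suc k" "set (butlast ys) \<subseteq> set ys"
        using ys by (auto simp: walks_def dest: in_set_butlastD)
      moreover have "hd (butlast ys) = hd ys"
        using ys_eq \<open>length (butlast ys) = Suc k\<close> by (metis hd_append2 list.size(3) nat.distinct(1))
      ultimately show ?thesis using ys by (auto simp: walks_def)
    qed
    ultimately show ?thesis by blast
  qed
  moreover have "xs @ [j] \<in> walks n (Suc k) i j" if "xs \<in> ?W" for xs
    using that True by (auto simp: walks_def hd_append)
  ultimately have "walks n (Suc k) i j = (\<lambda>xs. xs @ [j]) ` ?W"
    by (intro equalityI subsetI image_subsetI) blast+
  with True show ?thesis by simp
next
  case False
  have "last ys \<in> set ys" if "ys \<in> walks n (Suc k) i j" for ys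
    using that by (intro last_in_set) (auto simp: walks_def)
  with False show ?thesis by (auto simp: walks_def)
qed

lemma smat_pow_eq_sum_walks:
  assumes "i < n" "j < n"
  shows "smat_pow n M k i j = (\<Sum>xs\<in>walks n k i j. walk_weight M xs)"
  using assms(2)
proof (induction k arbitrary: j)
  case 0
  then show ?case using assms(1) by (simp add: walks_0 smat_id_def)
next
  case (Suc k)
  let ?W = "{xs. length xs = Suc k \<and> set xs \<subseteq> {..<n} \<and> hd xs = i}"
  have finW: "finite ?W"
    by (rule finite_subset[OF _ finite_lists_length_lessThan[of n "Suc k"]]) auto
  have lastW: "last ` ?W \<subseteq> {..<n}"
    by (auto simp: subset_iff) (metis last_in_set list.size(3) nat.distinct(1))
  have walks_k: "walks n k i l = {xs \<in> ?W. last xs = l}" for l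
    unfolding walks_def by auto
  have "smat_pow n M (Suc k) i j = (\<Sum>l<n. \<Sum>xs\<in>walks n k i l. walk_weight M xs * M l j)"
    using Suc.IH by (simp add: smat_mult_def sum_distrib_right)
  also have "\<dots> = (\<Sum>l<n. \<Sum>xs\<in>{xs \<in> ?W. last xs = l}. walk_weight M (xs @ [j]))"
    unfolding walks_k by (intro sum.cong refl) (auto simp: walk_weight_snoc simp flip: length_greater_0_conv)
  also have "\<dots> = (\<Sum>xs\<in>?W. walk_weight M (xs @ [j]))"
    by (rule sum.group[OF finW finite_lessThan lastW])
  also have "\<dots> = (\<Sum>xs\<in>walks n (Suc k) i j. walk_weight M xs)"
    using Suc.prems by (simp add: walks_Suc sum.reindex inj_on_def)
  finally show ?case .
qed

lemma smat_mult_assoc: "smat_mult n (smat_mult n X Y) Z = smat_mult n X (smat_mult n Y Z)"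
proof (intro ext)
  fix i j
  have "smat_mult n (smat_mult n X Y) Z i j = (\<Sum>k<n. \<Sum>l<n. X i l * Y l k * Z k j)"
    by (simp add: smat_mult_def sum_distrib_right)
  also have "\<dots> = (\<Sum>l<n. \<Sum>k<n. X i l * (Y l k * Z k j))"
    by (subst sum.swap) (simp add: mult.assoc)
  also have "\<dots> = smat_mult n X (smat_mult n Y Z) i j"
    by (simp add: smat_mult_def sum_distrib_left)
  finally show "smat_mult n (smat_mult n X Y) Z i j = smat_mult n X (smat_mult n Y Z) i j" .
qed

lemma smat_mult_id_left: "i < n \<Longrightarrow> smat_mult n smat_id M i j = M i j"
  and smat_mult_id_right: "j < n \<Longrightarrow> smat_mult n M smat_id i j = M i j"
  by (simp_all add: smat_mult_def smat_id_def if_distrib if_distribR sum.delta sum.delta' cong: if_cong)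

lemma smat_mult_cong:
  "(\<And>l. l < n \<Longrightarrow> X i l = X' i l) \<Longrightarrow> (\<And>l. l < n \<Longrightarrow> Y l j = Y' l j) \<Longrightarrow>
   smat_mult n X Y i j = smat_mult n X' Y' i j"
  unfolding smat_mult_def by (rule sum.cong) auto

lemma smat_pow_Suc_left:
  "i < n \<Longrightarrow> j < n \<Longrightarrow> smat_pow n M (Suc k) i j = smat_mult n M (smat_pow n M k) i j"
proof (induction k arbitrary: i j)
  case 0
  then show ?case by (simp add: smat_mult_id_left smat_mult_id_right)
next
  case (Suc k)
  have "smat_pow n M (Suc (Suc k)) i j = smat_mult n (smat_mult n M (smat_pow n M k)) M i j"
    by (simp only: smat_pow.simps(2)) (rule smat_mult_cong; use Suc in simp)
  then show ?case by (simp add: smat_mult_assoc)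
qed

locale corner_dominant =
  fixes n :: nat and M :: "'g::linordered_ab_group_add smat"
  assumes n_pos: "1 \<le> n"
    and corner: "M 0 0 = 1"
    and off_corner: "\<And>i j. i < n \<Longrightarrow> j < n \<Longrightarrow> (i, j) \<noteq> (0, 0) \<Longrightarrow> mod_less (M i j) 1"
begin

lemma entry_mod_le_1: "i < n \<Longrightarrow> j < n \<Longrightarrow> mod_le (M i j) 1"
  using off_corner[of i j] corner mod_less_imp_le by (cases "(i, j) = (0, 0)") auto

lemma walk_weight_cases: "set xs \<subseteq> {..<n} \<Longrightarrow> walk_weight M xs = 1 \<or> mod_less (walk_weight M xs) 1"
proof (induction xs rule: induct_list012)
  case (3 x y zs)
  then have IH: "walk_weight M (y # zs) = 1 \<or> mod_less (walk_weight M (y # zs)) 1"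
    and xy: "x < n" "y < n" by auto
  show ?case
  proof (cases "(x, y) = (0, 0)")
    case True
    then show ?thesis using IH corner by auto
  next
    case False
    have "mod_le (walk_weight M (y # zs)) 1" using IH mod_less_imp_le by auto
    then have "mod_less (M x y * walk_weight M (y # zs)) (1 * 1)"
      by (rule mod_less_mult[OF off_corner[OF xy False]])
    then show ?thesis by simp
  qed
qed simp_all

lemma walk_shortcut:
  assumes xs: "xs \<in> walks n k i j" and k: "n \<le> k"
  obtains k' ys where "k' < k" "ys \<in> walks n k' i j"
    "walk_weight M xs = walk_weight M ys \<or> mod_less (walk_weight M xs) (walk_weight M ys)"
proof -
  have len: "length xs = Suc k" and st: "set xs \<subseteq> {..<n}" and hd: "hd xs = i" and la: "last xs = j"
    using xs unfolding walks_def by auto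
  have "\<not> distinct xs"
  proof
    assume "distinct xs"
    then have "card (set xs) = Suc k" using len distinct_card by metis
    moreover have "card (set xs) \<le> n" using st card_mono[of "{..<n}" "set xs"] by simp
    ultimately show False using k by simp
  qed
  then obtain as y bs cs where dec: "xs = as @ [y] @ bs @ [y] @ cs"
    using not_distinct_decomp by blast
  define ys where "ys = as @ [y] @ cs"
  have "length as + length cs < k" using len dec by simp
  moreover have "ys \<in> walks n (length as + length cs) i j"
    unfolding walks_def ys_def using st hd la dec by (cases as; cases cs) auto
  moreover have "walk_weight M xs = walk_weight M ys \<or> mod_less (walk_weight M xs) (walk_weight M ys)"
  proof -
    have "set (y # bs @ [y]) \<subseteq> {..<n}" using st dec by auto
    then have cycle: "walk_weight M (y # bs @ [y]) = 1 \<or> mod_less (walk_weight M (y # bs @ [y])) 1"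
      by (rule walk_weight_cases)
    have "walk_weight M xs = walk_weight M (y # bs @ [y]) * walk_weight M ys"
      unfolding dec ys_def
      using walk_weight_append[of M as y "bs @ [y] @ cs"] walk_weight_append[of M "y # bs" y cs]
        walk_weight_append[of M as y cs]
      by (simp add: ac_simps)
    with cycle show ?thesis using mod_less_mult_1 by auto
  qed
  ultimately show ?thesis using that by blast
qed

lemma add_walk_weight_1: "set xs \<subseteq> {..<n} \<Longrightarrow> 1 + walk_weight M xs = 1"
  using walk_weight_cases[of xs] mod_less_absorb[of "walk_weight M xs" 1] by auto

lemma kleene_partial_add_walk_weight:
  assumes "i < n" "j < n" "k \<le> K" "ys \<in> walks n k i j"
  shows "kleene_partial n M K i j + walk_weight M ys = kleene_partial n M K i j"
proof -
  have pow: "smat_pow n M k i j + walk_weight M ys = smat_pow n M k i j"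
    unfolding smat_pow_eq_sum_walks[OF assms(1,2)] by (rule sum_add_summand[OF finite_walks assms(4)])
  have "kleene_partial n M K i j + smat_pow n M k i j = kleene_partial n M K i j"
    unfolding kleene_partial_def by (rule sum_add_summand) (use assms(3) in auto)
  then show ?thesis using pow by (metis add.assoc)
qed

lemma kleene_partial_Suc:
  assumes "i < n" "j < n" "n \<le> Suc K"
  shows "kleene_partial n M (Suc K) i j = kleene_partial n M K i j"
proof -
  let ?P = "kleene_partial n M K i j"
  have "?P + smat_pow n M (Suc K) i j = ?P"
    unfolding smat_pow_eq_sum_walks[OF assms(1,2)]
  proof (rule add_sum_absorb)
    fix xs assume "xs \<in> walks n (Suc K) i j"
    then obtain k ys where k: "k < Suc K" and ys_walk: "ys \<in> walks n k i j"
      and shortcut: "walk_weight M xs = walk_weight M ys \<or> mod_less (walk_weight M xs) (walk_weight M ys)"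
      using walk_shortcut assms(3) by blast
    have ys: "?P + walk_weight M ys = ?P"
      by (rule kleene_partial_add_walk_weight[OF assms(1,2) _ ys_walk]) (use k in simp)
    from shortcut show "?P + walk_weight M xs = ?P"
    proof
      assume "mod_less (walk_weight M xs) (walk_weight M ys)"
      then show ?thesis
        using mod_less_le_trans[OF _ absorb_imp_mod_le[OF ys]] mod_less_absorb by blast
    qed (use ys in simp)
  qed
  then show ?thesis unfolding kleene_partial_def by (simp add: add.commute)
qed

lemma kleene_partial_stable:
  assumes "i < n" "j < n" "n - 1 \<le> K"
  shows "kleene_partial n M K i j = kleene_partial n M (n - 1) i j"
  using assms(3)
proof (induction K rule: dec_induct)
  case (step K)
  then show ?case using kleene_partial_Suc[OF assms(1,2)] by simp
qed simp

lemma kleene_converges: "kleene_converges n M"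
  unfolding kleene_converges_def using kleene_partial_stable by blast

lemma kleene_star_eq_partial:
  assumes "i < n" "j < n"
  shows "kleene_star n M i j = kleene_partial n M (n - 1) i j"
  unfolding kleene_star_def
proof (rule the_equality)
  show "\<exists>K0. \<forall>K\<ge>K0. kleene_partial n M K i j = kleene_partial n M (n - 1) i j"
    using kleene_partial_stable[OF assms] by blast
next
  fix s assume "\<exists>K0. \<forall>K\<ge>K0. kleene_partial n M K i j = s"
  then obtain K0 where "kleene_partial n M (max K0 (n - 1)) i j = s" by (meson max.cobounded1)
  then show "s = kleene_partial n M (n - 1) i j"
    using kleene_partial_stable[OF assms, of "max K0 (n - 1)"] by simp
qed

lemma kleene_star_eq_sum_powers: "i < n \<Longrightarrow> j < n \<Longrightarrow> kleene_star n M i j = (\<Sum>k<n. smat_pow n M k i j)"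
  using n_pos by (simp add: kleene_star_eq_partial kleene_partial_def lessThan_Suc_atMost[symmetric])

lemma add_smat_pow_1: "i < n \<Longrightarrow> j < n \<Longrightarrow> 1 + smat_pow n M k i j = 1"
  unfolding smat_pow_eq_sum_walks by (rule add_sum_absorb, rule add_walk_weight_1) (auto simp: walks_def)

lemma kleene_star_mod_le_1: "i < n \<Longrightarrow> j < n \<Longrightarrow> mod_le (kleene_star n M i j) 1"
  by (rule absorb_imp_mod_le) (simp add: kleene_star_eq_sum_powers add_sum_absorb add_smat_pow_1)

lemma kleene_star_corner: "kleene_star n M 0 0 = 1"
  using n_pos add_smat_pow_1[of 0 0]
  by (simp add: kleene_star_eq_sum_powers) (rule sum_eq_absorbing[of _ 0]; simp add: smat_id_def)

lemma kleene_star_col0_fixpoint: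
  assumes i: "i < n"
  shows "(\<Sum>j<n. M i j * kleene_star n M j 0) = kleene_star n M i 0"
proof (cases "i = 0")
  case False
  have "kleene_star n M i 0 = kleene_partial n M n i 0"
    using kleene_star_eq_partial[of i 0] kleene_partial_stable[of i 0 n] i n_pos by simp
  also have "\<dots> = smat_pow n M 0 i 0 + (\<Sum>k<n. smat_pow n M (Suc k) i 0)"
    unfolding kleene_partial_def by (rule sum.atMost_shift)
  also have "\<dots> = (\<Sum>k<n. \<Sum>j<n. M i j * smat_pow n M k j 0)"
    using i False n_pos by (simp add: smat_id_def smat_pow_Suc_left smat_mult_def del: smat_pow.simps(2))
  also have "\<dots> = (\<Sum>j<n. M i j * kleene_star n M j 0)"
    using n_pos by (subst sum.swap) (simp add: sum_distrib_left kleene_star_eq_sum_powers)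
  finally show ?thesis by simp
next
  case True
  have "(\<Sum>j<n. M 0 j * kleene_star n M j 0) = 1"
  proof (rule sum_eq_absorbing[of _ 0])
    fix j assume j: "j \<in> {..<n}"
    show "1 + M 0 j * kleene_star n M j 0 = 1"
    proof (cases "j = 0")
      case False
      have "mod_less (M 0 j * kleene_star n M j 0) (1 * 1)"
        by (rule mod_less_mult[OF off_corner kleene_star_mod_le_1]) (use j n_pos False in auto)
      then show ?thesis using mod_less_absorb by simp
    qed (simp add: corner kleene_star_corner)
  qed (use n_pos in \<open>simp_all add: corner kleene_star_corner\<close>)
  then show ?thesis using True kleene_star_corner by simp
qed

end

section \<open>Uniqueness of fixpoints of contracting rows\<close>

lemma contracting_fixpoint_dominates:
  fixes x y :: "nat \<Rightarrow> 'g::linordered_ab_group_add smax"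
  assumes I: "I \<subseteq> {..<n}"
    and contracting: "\<And>i j. i \<in> I \<Longrightarrow> j < n \<Longrightarrow> mod_less (M i j) 1"
    and y_fix: "\<And>i. i \<in> I \<Longrightarrow> y i = (\<Sum>j<n. M i j * y j)"
    and x_sub: "\<And>i. i \<in> I \<Longrightarrow> mod_le (x i) (\<Sum>j<n. M i j * x j)"
    and outside: "\<And>j. j < n \<Longrightarrow> j \<notin> I \<Longrightarrow> x j = y j"
    and "i \<in> I"
  shows "mod_le (x i) (y i)"
proof (rule ccontr)
  define S where "S = {i \<in> I. \<not> mod_le (x i) (y i)}"
  assume "\<not> mod_le (x i) (y i)"
  then have "S \<noteq> {}" "finite S"
    using \<open>i \<in> I\<close> I unfolding S_def by (auto intro: finite_subset)
  then obtain i where "i \<in> S" and max: "\<forall>j\<in>S. mod_le (x j) (x i)"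
    using ex_mod_le_max[of S x] by blast
  then have i: "i \<in> I" "\<not> mod_le (x i) (y i)" and "x i \<noteq> 0" unfolding S_def by auto
  then obtain j where j: "j < n" and xj: "mod_le (x i) (M i j * x j)"
    using x_sub[OF i(1)] mod_le_sumD by blast
  have "mod_less (x i) (x j)"
    using mod_le_less_trans[OF xj mod_less_mult_1[OF contracting[OF i(1) j]]] .
  then have "j \<notin> S" using max \<open>x i \<noteq> 0\<close> mod_less_not_le by blast
  then have "mod_le (x j) (y j)" using outside[OF j] S_def by (cases "j \<in> I") auto
  then have "mod_le (M i j * x j) (M i j * y j)" by (rule mod_le_mult[OF mod_le_refl])
  then have "mod_le (x i) (M i j * y j)" by (rule mod_le_trans[OF xj])
  moreover have "mod_le (M i j * y j) (y i)" using y_fix[OF i(1)] mod_le_sum[of "{..<n}" j] j by simp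
  ultimately show False using i(2) mod_le_trans by metis
qed

lemma contracting_fixpoint_unique:
  fixes x y :: "nat \<Rightarrow> 'g::linordered_ab_group_add smax"
  assumes I: "I \<subseteq> {..<n}"
    and contracting: "\<And>i j. i \<in> I \<Longrightarrow> j < n \<Longrightarrow> mod_less (M i j) 1"
    and y_fix: "\<And>i. i \<in> I \<Longrightarrow> y i = (\<Sum>j<n. M i j * y j)"
    and x_sub: "\<And>i. i \<in> I \<Longrightarrow> mod_le (x i) (\<Sum>j<n. M i j * x j)"
    and x_eq: "\<And>i. i \<in> I \<Longrightarrow> (\<Sum>j<n. M i j * x j) = y i \<Longrightarrow> x i = y i"
    and outside: "\<And>j. j < n \<Longrightarrow> j \<notin> I \<Longrightarrow> x j = y j"
    and "i \<in> I"
  shows "x i = y i"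
proof (rule ccontr)
  note x_le_y = contracting_fixpoint_dominates[OF I contracting y_fix x_sub outside]
  define S where "S = {i \<in> I. x i \<noteq> y i}"
  assume "x i \<noteq> y i"
  then have "S \<noteq> {}" "finite S" "S \<subseteq> {..<n}"
    using \<open>i \<in> I\<close> I unfolding S_def by (auto intro: finite_subset)
  then obtain i where "i \<in> S" and max: "\<forall>j\<in>S. mod_le (y j) (y i)"
    using ex_mod_le_max[of S y] by blast
  then have i: "i \<in> I" "x i \<noteq> y i" unfolding S_def by auto
  have agree: "M i j * x j = M i j * y j" if "j \<in> {..<n} - S" for j
    using that outside S_def by (cases "j \<in> I") auto
  have small_on_S: "mod_less (M i j * x j) (y i)" "mod_less (M i j * y j) (y i)" if "j \<in> S" for j
  proof -
    have "j < n" "mod_le (y j) (y i)" "mod_le (x j) (y j)"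
      using that max \<open>S \<subseteq> {..<n}\<close> x_le_y S_def by auto
    then show "mod_less (M i j * x j) (y i)" "mod_less (M i j * y j) (y i)"
      using mod_less_mult_1[OF contracting[OF i(1)]] mod_less_le_trans mod_le_trans by metis+
  qed
  let ?T = "\<Sum>j\<in>{..<n} - S. M i j * y j"
  have "y i = ?T + (\<Sum>j\<in>S. M i j * y j)"
    using y_fix[OF i(1)] sum.subset_diff[OF \<open>S \<subseteq> {..<n}\<close> finite_lessThan] by simp
  moreover have "mod_less (\<Sum>j\<in>S. M i j * y j) (y i)" by (rule sum_mod_less[OF small_on_S(2)])
  ultimately have y_eq: "y i = ?T" by (rule add_mod_less_cancel)
  have "(\<Sum>j<n. M i j * x j) = (\<Sum>j\<in>{..<n} - S. M i j * x j) + (\<Sum>j\<in>S. M i j * x j)"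
    using sum.subset_diff[OF \<open>S \<subseteq> {..<n}\<close> finite_lessThan] by simp
  also have "(\<Sum>j\<in>{..<n} - S. M i j * x j) = ?T" using agree by (rule sum.cong[OF refl])
  also have "?T + (\<Sum>j\<in>S. M i j * x j) = y i"
    using y_eq mod_less_absorb[OF sum_mod_less[OF small_on_S(1)]] by simp
  finally show False using x_eq[OF i(1)] i(2) by simp
qed

section \<open>Cofactors along the first row\<close>

definition lift_perm :: "(nat \<Rightarrow> nat) \<Rightarrow> nat \<Rightarrow> nat" where
  "lift_perm \<sigma> r = (case r of 0 \<Rightarrow> 0 | Suc k \<Rightarrow> Suc (\<sigma> k))"

lemma lift_perm_0 [simp]: "lift_perm \<sigma> 0 = 0"
  and lift_perm_Suc [simp]: "lift_perm \<sigma> (Suc k) = Suc (\<sigma> k)"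
  by (simp_all add: lift_perm_def)

lemma lift_perm_comp: "lift_perm (p \<circ> q) = lift_perm p \<circ> lift_perm q"
  and lift_perm_id: "lift_perm id = id"
  and lift_perm_transpose: "lift_perm (transpose a b) = transpose (Suc a) (Suc b)"
  by (rule ext, simp add: lift_perm_def transpose_def split: nat.splits)+

lemma permutes_lift_perm:
  assumes "\<sigma> permutes {..<m}"
  shows "lift_perm \<sigma> permutes {..<Suc m}"
proof -
  have "lift_perm \<sigma> permutes {0} \<union> Suc ` {..<m}"
  proof (rule bij_imp_permutes)
    show "bij_betw (lift_perm \<sigma>) ({0} \<union> Suc ` {..<m}) ({0} \<union> Suc ` {..<m})"
      using permutes_imp_bij[OF assms]
      by (auto simp: bij_betw_def inj_on_def image_image image_comp[symmetric] split: nat.splits)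
  next
    fix x assume "x \<notin> {0} \<union> Suc ` {..<m}"
    then show "lift_perm \<sigma> x = x"
      by (cases x) (auto intro: permutes_not_in[OF assms] simp: image_iff)
  qed
  moreover have "{0} \<union> Suc ` {..<m} = {..<Suc m}"
    using lessThan_Suc_eq_insert_0 by auto
  ultimately show ?thesis by simp
qed

lemma evenperm_lift_perm:
  assumes "\<sigma> permutes {..<m}"
  shows "evenperm (lift_perm \<sigma>) = evenperm \<sigma>"
  using assms finite_lessThan
proof (induction rule: permutes_induct)
  case id
  show ?case by (subst lift_perm_id) (rule refl)
next
  case (swap a b p)
  have p: "permutation p" and lp: "permutation (lift_perm p)"
    using permutes_imp_permutation[OF finite_lessThan] swap.hyps(4) permutes_lift_perm by blast+
  have "evenperm (lift_perm (transpose a b \<circ> p)) = evenperm (transpose (Suc a) (Suc b) \<circ> lift_perm p)"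
    by (simp only: lift_perm_comp lift_perm_transpose)
  also have "\<dots> = (evenperm (transpose a b) = evenperm p)"
    using swap.hyps(3) swap.IH by (simp only: evenperm_comp[OF permutation_swap_id lp] evenperm_swap) simp
  also have "\<dots> = evenperm (transpose a b \<circ> p)"
    by (rule evenperm_comp[OF permutation_swap_id p, symmetric])
  finally show ?case .
qed

fun cycle_to :: "nat \<Rightarrow> nat \<Rightarrow> nat" where
  "cycle_to 0 = id"
| "cycle_to (Suc i) = transpose i (Suc i) \<circ> cycle_to i"

lemma cycle_to_0: "cycle_to i 0 = i"
  by (induction i) auto

lemma cycle_to_Suc: "cycle_to i (Suc k) = skip i k"
  by (induction i) (auto simp: skip_def transpose_def)

lemma permutes_cycle_to: "cycle_to i permutes {..i}"
proof (induction i)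
  case (Suc i)
  have "cycle_to i permutes {..Suc i}" using permutes_subset[OF Suc.IH] by auto
  moreover have "transpose i (Suc i) permutes {..Suc i}" by (rule permutes_swap_id) auto
  ultimately show ?case by (simp only: cycle_to.simps permutes_compose)
qed (simp only: cycle_to.simps permutes_id)

lemma permutation_cycle_to: "permutation (cycle_to i)"
  using permutes_imp_permutation[OF _ permutes_cycle_to] by simp

lemma evenperm_cycle_to: "evenperm (cycle_to i) = even i"
proof (induction i)
  case (Suc i)
  have "evenperm (cycle_to (Suc i)) = (evenperm (transpose i (Suc i)) = evenperm (cycle_to i))"
    by (simp only: cycle_to.simps) (rule evenperm_comp[OF permutation_swap_id permutation_cycle_to])
  then show ?case using Suc.IH by (simp add: evenperm_swap del: cycle_to.simps)
qed simp

lemma permutes_unlift_perm: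
  assumes \<psi>: "\<psi> permutes {..<Suc m}" and \<psi>0: "\<psi> 0 = 0"
  shows "(\<lambda>k. \<psi> (Suc k) - 1) permutes {..<m}"
  unfolding permutes_def
proof (intro conjI allI impI)
  fix x assume "x \<notin> {..<m}"
  then show "\<psi> (Suc x) - 1 = x" using permutes_not_in[OF \<psi>] by simp
next
  have nz: "\<psi> (Suc k) \<noteq> 0" for k
    using \<psi>0 permutes_inj[OF \<psi>] by (metis injD nat.distinct(1))
  fix y
  obtain x where x: "\<psi> x = Suc y" using permutes_surj[OF \<psi>] by (metis surjD)
  with \<psi>0 obtain x' where x': "x = Suc x'" by (cases x) auto
  show "\<exists>!x. \<psi> (Suc x) - 1 = y"
  proof (rule ex1I[of _ x'])
    show "\<psi> (Suc x') - 1 = y" using x x' by simp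
  next
    fix w assume "\<psi> (Suc w) - 1 = y"
    then have "\<psi> (Suc w) = \<psi> (Suc x')" using nz[of w] x x' by simp
    then show "w = x'" by (simp add: inj_eq[OF permutes_inj[OF \<psi>]])
  qed
qed

lemma bij_betw_lift_perm:
  "bij_betw lift_perm {\<sigma>. \<sigma> permutes {..<m}} {\<psi>. \<psi> permutes {..<Suc m} \<and> \<psi> 0 = 0}"
proof (rule bij_betw_byWitness[where f' = "\<lambda>\<psi> k. \<psi> (Suc k) - 1"])
  show "lift_perm ` {\<sigma>. \<sigma> permutes {..<m}} \<subseteq> {\<psi>. \<psi> permutes {..<Suc m} \<and> \<psi> 0 = 0}"
    using permutes_lift_perm by auto
  show "(\<lambda>\<psi> k. \<psi> (Suc k) - 1) ` {\<psi>. \<psi> permutes {..<Suc m} \<and> \<psi> 0 = 0} \<subseteq> {\<sigma>. \<sigma> permutes {..<m}}"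
    using permutes_unlift_perm by auto
  show "\<forall>\<sigma>\<in>{\<sigma>. \<sigma> permutes {..<m}}. (\<lambda>k. lift_perm \<sigma> (Suc k) - 1) = \<sigma>"
    by simp
  show "\<forall>\<psi>\<in>{\<psi>. \<psi> permutes {..<Suc m} \<and> \<psi> 0 = 0}. lift_perm (\<lambda>k. \<psi> (Suc k) - 1) = \<psi>"
  proof (intro ballI ext)
    fix \<psi> r assume \<psi>: "\<psi> \<in> {\<psi>. \<psi> permutes {..<Suc m} \<and> \<psi> 0 = 0}"
    then have "\<psi> (Suc k) \<noteq> 0" for k
      using permutes_inj by (metis (mono_tags) injD mem_Collect_eq nat.distinct(1))
    with \<psi> show "lift_perm (\<lambda>k. \<psi> (Suc k) - 1) r = \<psi> r" by (cases r) auto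
  qed
qed

lemma bij_betw_comp_cycle_to:
  assumes "i < n"
  shows "bij_betw ((\<circ>) (cycle_to i)) {\<psi>. \<psi> permutes {..<n} \<and> \<psi> 0 = 0} {\<phi>. \<phi> permutes {..<n} \<and> \<phi> 0 = i}"
proof -
  have c: "cycle_to i permutes {..<n}"
    by (rule permutes_subset[OF permutes_cycle_to]) (use assms in auto)
  show ?thesis
  proof (rule bij_betw_byWitness[where f' = "(\<circ>) (inv (cycle_to i))"])
    show "(\<circ>) (cycle_to i) ` {\<psi>. \<psi> permutes {..<n} \<and> \<psi> 0 = 0} \<subseteq> {\<phi>. \<phi> permutes {..<n} \<and> \<phi> 0 = i}"
      using permutes_compose[OF _ c] by (auto simp: cycle_to_0)
    show "(\<circ>) (inv (cycle_to i)) ` {\<phi>. \<phi> permutes {..<n} \<and> \<phi> 0 = i} \<subseteq> {\<psi>. \<psi> permutes {..<n} \<and> \<psi> 0 = 0}"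
      using permutes_compose[OF _ permutes_inv[OF c]] permutes_inverses(2)[OF c, of 0]
      by (auto simp: cycle_to_0)
    show "\<forall>\<psi>\<in>{\<psi>. \<psi> permutes {..<n} \<and> \<psi> 0 = 0}. inv (cycle_to i) \<circ> (cycle_to i \<circ> \<psi>) = \<psi>"
      "\<forall>\<phi>\<in>{\<phi>. \<phi> permutes {..<n} \<and> \<phi> 0 = i}. cycle_to i \<circ> (inv (cycle_to i) \<circ> \<phi>) = \<phi>"
      by (simp_all add: o_assoc permutes_inv_o[OF c])
  qed
qed

lemma ssign_comp:
  "permutation p \<Longrightarrow> permutation q \<Longrightarrow> ssign (p \<circ> q) = ssign p * (ssign q :: 'g::linordered_ab_group_add smax)"
  by (auto simp: ssign_def evenperm_comp sminus_mult_sminus simp flip: sminus_mult_left)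

lemma ssign_transpose: "a \<noteq> b \<Longrightarrow> ssign (transpose a b) = sminus 1"
  by (simp add: ssign_def evenperm_swap)

lemma ssign_cycle_to: "ssign (cycle_to i) = sminus 1 ^ i"
  by (simp add: ssign_def evenperm_cycle_to power_sminus_1)

lemma ssign_lift_perm: "\<sigma> permutes {..<m} \<Longrightarrow> ssign (lift_perm \<sigma>) = ssign \<sigma>"
  by (simp add: ssign_def evenperm_lift_perm)

definition det_on :: "'g::linordered_ab_group_add smat \<Rightarrow> nat set \<Rightarrow> 'g smax" where
  "det_on B U = (\<Sum>\<phi> | \<phi> permutes U. ssign \<phi> * (\<Prod>r\<in>U. B r (\<phi> r)))"

text \<open>\<open>cofactor0 B V i\<close> is the \<open>(0, i)\<close> cofactor of \<open>B\<close> restricted to \<open>V \<times> V\<close>: its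
  determinant with row \<open>0\<close> replaced by the \<open>i\<close>-th unit vector.\<close>

definition cofactor0 :: "'g::linordered_ab_group_add smat \<Rightarrow> nat set \<Rightarrow> nat \<Rightarrow> 'g smax" where
  "cofactor0 B V i = (\<Sum>\<phi> | \<phi> permutes V \<and> \<phi> 0 = i. ssign \<phi> * (\<Prod>r\<in>V - {0}. B r (\<phi> r)))"

lemma sadj_col0_eq_cofactor0:
  assumes i: "i < n"
  shows "sadj n B i 0 = cofactor0 B {..<n} i"
proof -
  define m where "m = n - 1"
  have n: "n = Suc m" using i m_def by simp
  \<comment> \<open>Permutations of the minor lift to permutations fixing \<open>0\<close>; composing with the cycle
    \<open>cycle_to i\<close>, of sign \<open>(\<ominus>\<one>) ^ i\<close>, makes them send \<open>0\<close> to \<open>i\<close>.\<close>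
  define F where "F \<sigma> = cycle_to i \<circ> lift_perm \<sigma>" for \<sigma>
  have bij: "bij_betw F {\<sigma>. \<sigma> permutes {..<m}} {\<phi>. \<phi> permutes {..<n} \<and> \<phi> 0 = i}"
    unfolding F_def n using i n bij_betw_trans[OF bij_betw_lift_perm bij_betw_comp_cycle_to[of i "Suc m"]]
    by (simp add: comp_def)
  have rows: "{..<n} - {0} = Suc ` {..<m}"
    unfolding n lessThan_Suc_eq_insert_0 by auto
  have summand: "ssign (F \<sigma>) * (\<Prod>r\<in>{..<n} - {0}. B r (F \<sigma> r))
      = sminus 1 ^ i * (ssign \<sigma> * (\<Prod>k<m. B (Suc k) (skip i (\<sigma> k))))"
    if "\<sigma> permutes {..<m}" for \<sigma>
  proof -
    have "permutation (lift_perm \<sigma>)"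
      using permutes_imp_permutation[OF _ permutes_lift_perm[OF that]] by simp
    then have "ssign (F \<sigma>) = sminus 1 ^ i * ssign \<sigma>"
      unfolding F_def using that
      by (simp add: ssign_comp permutation_cycle_to ssign_cycle_to ssign_lift_perm)
    moreover have "(\<Prod>r\<in>{..<n} - {0}. B r (F \<sigma> r)) = (\<Prod>k<m. B (Suc k) (skip i (\<sigma> k)))"
      unfolding rows by (simp add: prod.reindex F_def cycle_to_Suc)
    ultimately show ?thesis by (metis mult.assoc)
  qed
  have "sadj n B i 0 = (\<Sum>\<sigma> | \<sigma> permutes {..<m}. sminus 1 ^ i * (ssign \<sigma> * (\<Prod>k<m. B (Suc k) (skip i (\<sigma> k)))))"
    unfolding sadj_def sdet_def minor_def m_def by (simp add: sum_distrib_left skip_def)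
  also have "\<dots> = (\<Sum>\<sigma> | \<sigma> permutes {..<m}. ssign (F \<sigma>) * (\<Prod>r\<in>{..<n} - {0}. B r (F \<sigma> r)))"
    by (simp add: summand)
  also have "\<dots> = cofactor0 B {..<n} i"
    unfolding cofactor0_def by (rule sum.reindex_bij_betw[OF bij])
  finally show ?thesis .
qed

lemma bij_betw_comp_transpose_0:
  assumes "0 \<in> V" "i \<in> V" "i \<noteq> 0"
  shows "bij_betw (\<lambda>\<phi>. \<phi> \<circ> transpose 0 i)
           {\<phi>. \<phi> permutes V \<and> \<phi> 0 = i \<and> \<phi> i = j} {\<psi>. \<psi> permutes (V - {i}) \<and> \<psi> 0 = j}"
proof (rule bij_betw_byWitness[where f' = "\<lambda>\<psi>. \<psi> \<circ> transpose 0 i"])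
  have t: "transpose 0 i permutes V" by (rule permutes_swap_id) (use assms in auto)
  show "(\<lambda>\<phi>. \<phi> \<circ> transpose 0 i) ` {\<phi>. \<phi> permutes V \<and> \<phi> 0 = i \<and> \<phi> i = j}
      \<subseteq> {\<psi>. \<psi> permutes (V - {i}) \<and> \<psi> 0 = j}"
  proof (rule image_subsetI)
    fix \<phi> assume "\<phi> \<in> {\<phi>. \<phi> permutes V \<and> \<phi> 0 = i \<and> \<phi> i = j}"
    moreover from this have "\<phi> \<circ> transpose 0 i permutes V" using permutes_compose[OF t] by blast
    ultimately show "\<phi> \<circ> transpose 0 i \<in> {\<psi>. \<psi> permutes (V - {i}) \<and> \<psi> 0 = j}"
      using permutes_superset[of "\<phi> \<circ> transpose 0 i" V "V - {i}"] by auto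
  qed
  show "(\<lambda>\<psi>. \<psi> \<circ> transpose 0 i) ` {\<psi>. \<psi> permutes (V - {i}) \<and> \<psi> 0 = j}
      \<subseteq> {\<phi>. \<phi> permutes V \<and> \<phi> 0 = i \<and> \<phi> i = j}"
  proof (rule image_subsetI)
    fix \<psi> assume "\<psi> \<in> {\<psi>. \<psi> permutes (V - {i}) \<and> \<psi> 0 = j}"
    then have \<psi>: "\<psi> permutes (V - {i})" "\<psi> 0 = j" by auto
    have "\<psi> permutes V" by (rule permutes_subset[OF \<psi>(1)]) auto
    then show "\<psi> \<circ> transpose 0 i \<in> {\<phi>. \<phi> permutes V \<and> \<phi> 0 = i \<and> \<phi> i = j}"
      using permutes_compose[OF t] permutes_not_in[OF \<psi>(1)] \<psi>(2) by auto
  qed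
qed (simp_all add: comp_assoc)

lemma cofactor0_fibre:
  fixes B :: "'g::linordered_ab_group_add smat"
  assumes V: "finite V" "0 \<in> V" and i: "i \<in> V" "i \<noteq> 0"
  shows "(\<Sum>\<phi> | \<phi> permutes V \<and> \<phi> 0 = i \<and> \<phi> i = j. ssign \<phi> * (\<Prod>r\<in>V - {0}. B r (\<phi> r)))
       = sminus (B i j) * cofactor0 B (V - {i}) j"
proof -
  define t where "t = transpose 0 i"
  let ?g = "\<lambda>\<psi>. ssign \<psi> * (\<Prod>r\<in>V - {i} - {0}. B r (\<psi> r))"
  have summand: "ssign \<phi> * (\<Prod>r\<in>V - {0}. B r (\<phi> r)) = sminus (B i j) * ?g (\<phi> \<circ> t)"
    if \<phi>: "\<phi> permutes V" "\<phi> i = j" for \<phi>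
  proof -
    let ?P = "\<Prod>r\<in>V - {0} - {i}. B r (\<phi> r)"
    have "ssign (\<phi> \<circ> t) = ssign \<phi> * (sminus 1 :: 'g smax)"
      unfolding t_def using i permutes_imp_permutation[OF V(1) \<phi>(1)]
      by (simp add: ssign_comp permutation_swap_id ssign_transpose)
    moreover have "(\<Prod>r\<in>V - {i} - {0}. B r ((\<phi> \<circ> t) r)) = ?P"
      by (rule prod.cong) (auto simp: t_def)
    ultimately have "sminus (B i j) * ?g (\<phi> \<circ> t) = (sminus (B i j) * sminus 1) * ssign \<phi> * ?P"
      by (simp add: ac_simps)
    also have "\<dots> = ssign \<phi> * (B i j * ?P)"
      by (simp add: sminus_mult_sminus ac_simps)
    also have "B i j * ?P = (\<Prod>r\<in>V - {0}. B r (\<phi> r))"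
      using prod.remove[of "V - {0}" i "\<lambda>r. B r (\<phi> r)"] V i \<phi>(2) by simp
    finally show ?thesis ..
  qed
  have "(\<Sum>\<phi> | \<phi> permutes V \<and> \<phi> 0 = i \<and> \<phi> i = j. ssign \<phi> * (\<Prod>r\<in>V - {0}. B r (\<phi> r)))
      = (\<Sum>\<phi> | \<phi> permutes V \<and> \<phi> 0 = i \<and> \<phi> i = j. sminus (B i j) * ?g (\<phi> \<circ> t))"
    by (rule sum.cong) (simp_all add: summand)
  also have "\<dots> = (\<Sum>\<psi> | \<psi> permutes (V - {i}) \<and> \<psi> 0 = j. sminus (B i j) * ?g \<psi>)"
    unfolding t_def by (rule sum.reindex_bij_betw[OF bij_betw_comp_transpose_0[OF V(2) i]])
  also have "\<dots> = sminus (B i j) * cofactor0 B (V - {i}) j"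
    unfolding cofactor0_def by (simp add: sum_distrib_left)
  finally show ?thesis .
qed

lemma cofactor0_expand:
  fixes B :: "'g::linordered_ab_group_add smat"
  assumes V: "finite V" "0 \<in> V" and i: "i \<in> V" "i \<noteq> 0"
  shows "cofactor0 B V i = (\<Sum>j\<in>V - {i}. sminus (B i j) * cofactor0 B (V - {i}) j)"
proof -
  let ?T = "{\<phi>. \<phi> permutes V \<and> \<phi> 0 = i}"
  have fin: "finite ?T" using finite_permutations[OF V(1)] by (rule rev_finite_subset) auto
  have "(\<lambda>\<phi>. \<phi> i) ` ?T \<subseteq> V - {i}"
  proof (rule image_subsetI)
    fix \<phi> assume "\<phi> \<in> ?T"
    then have \<phi>: "\<phi> permutes V" "\<phi> 0 = i" by auto
    then show "\<phi> i \<in> V - {i}"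
      using permutes_in_image[OF \<phi>(1)] i permutes_inj[OF \<phi>(1)] by (auto dest: injD)
  qed
  then have "cofactor0 B V i = (\<Sum>j\<in>V - {i}. \<Sum>\<phi> | \<phi> \<in> ?T \<and> \<phi> i = j. ssign \<phi> * (\<Prod>r\<in>V - {0}. B r (\<phi> r)))"
    unfolding cofactor0_def by (intro sum.group[symmetric] fin) (use V in simp_all)
  also have "\<dots> = (\<Sum>j\<in>V - {i}. sminus (B i j) * cofactor0 B (V - {i}) j)"
    using cofactor0_fibre[OF V i] by (intro sum.cong) (simp_all add: conj_assoc)
  finally show ?thesis .
qed

lemma cofactor0_0: "0 \<in> V \<Longrightarrow> cofactor0 B V 0 = det_on B (V - {0})"
  unfolding cofactor0_def det_on_def
  by (rule sum.cong) (auto intro: permutes_superset permutes_subset permutes_not_in)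

lemma ssign_mod_le_1: "mod_le (ssign \<phi>) (1::'g::linordered_ab_group_add smax)"
  unfolding ssign_def mod_le_def by (auto simp: smax_defs)

lemma det_on_dominant_diagonal:
  fixes B :: "'g::linordered_ab_group_add smat"
  assumes U: "finite U"
    and diag: "\<And>r. r \<in> U \<Longrightarrow> B r r = g"
    and off: "\<And>r c. r \<in> U \<Longrightarrow> c \<in> U \<Longrightarrow> r \<noteq> c \<Longrightarrow> mod_less (B r c) g"
  shows "det_on B U = g ^ card U"
  unfolding det_on_def
proof (rule sum_eq_absorbing[of _ id])
  show diagonal_term: "ssign id * (\<Prod>r\<in>U. B r (id r)) = g ^ card U"
    using diag by (simp add: ssign_def)
  fix \<phi> assume "\<phi> \<in> {\<phi>. \<phi> permutes U}"
  then have \<phi>: "\<phi> permutes U" by simp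
  show "g ^ card U + ssign \<phi> * (\<Prod>r\<in>U. B r (\<phi> r)) = g ^ card U"
  proof (cases "\<phi> = id")
    case False
    then obtain r0 where r0: "\<phi> r0 \<noteq> r0" by (metis eq_id_iff)
    then have "r0 \<in> U" using permutes_not_in[OF \<phi>] by blast
    have "mod_less (\<Prod>r\<in>U. B r (\<phi> r)) (\<Prod>r\<in>U. g)"
    proof (rule prod_mod_less[OF U \<open>r0 \<in> U\<close>])
      show "mod_less (B r0 (\<phi> r0)) g"
        using off \<open>r0 \<in> U\<close> permutes_in_image[OF \<phi>] r0 by simp
      fix r assume "r \<in> U"
      then show "mod_le (B r (\<phi> r)) g"
        using off[of r "\<phi> r"] diag[of r] permutes_in_image[OF \<phi>] mod_less_imp_le by (cases "\<phi> r = r") auto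
    qed
    then have "mod_less ((\<Prod>r\<in>U. B r (\<phi> r)) * ssign \<phi>) ((\<Prod>r\<in>U. g) * 1)"
      using mod_less_mult ssign_mod_le_1 by blast
    then show ?thesis using mod_less_absorb by (simp add: mult.commute)
  qed (use diagonal_term in simp)
qed (use U in \<open>simp_all add: finite_permutations\<close>)

section \<open>Cofactors of the characteristic matrix as sums over simple paths\<close>

text \<open>\<open>path_sum M W i\<close> is the total weight of the simple paths from \<open>i\<close> to \<open>0\<close> whose
  other vertices lie in \<open>W\<close>; the depth argument of \<open>path_sum_depth\<close> only makes the recursion
  terminate.\<close>

fun path_sum_depth :: "'g::linordered_ab_group_add smat \<Rightarrow> nat \<Rightarrow> nat set \<Rightarrow> nat \<Rightarrow> 'g smax" where
  "path_sum_depth M 0 W i = M i 0"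
| "path_sum_depth M (Suc k) W i = M i 0 + (\<Sum>j\<in>W - {i}. M i j * path_sum_depth M k (W - {i}) j)"

definition path_sum :: "'g::linordered_ab_group_add smat \<Rightarrow> nat set \<Rightarrow> nat \<Rightarrow> 'g smax" where
  "path_sum M W i = path_sum_depth M (card W) W i"

lemma path_sum_rec:
  assumes "finite W" "i \<in> W"
  shows "path_sum M W i = M i 0 + (\<Sum>j\<in>W - {i}. M i j * path_sum M (W - {i}) j)"
proof -
  have card: "card W = Suc (card (W - {i}))" using card_Suc_Diff1[OF assms] by simp
  show ?thesis unfolding path_sum_def card by simp
qed

context corner_dominant
begin

lemma path_sum_mono:
  assumes "W \<subseteq> {1..<n}" "U \<subseteq> W" "i \<in> U"
  shows "mod_le (path_sum M U i) (path_sum M W i)"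
  using assms
proof (induction "card W" arbitrary: W U i rule: less_induct)
  case less
  have W: "finite W" "i \<in> W"
    using less.prems finite_subset[of W "{1..<n}"] by auto
  have U: "finite U" using finite_subset[OF less.prems(2) W(1)] .
  let ?S = "\<Sum>j\<in>W - {i}. M i j * path_sum M (W - {i}) j"
  have step: "mod_le (M i j * path_sum M (U - {i}) j) (path_sum M W i)" if j: "j \<in> U - {i}" for j
  proof -
    have "mod_le (path_sum M (U - {i}) j) (path_sum M (W - {i}) j)"
      by (rule less.hyps[OF card_Diff1_less[OF W]]) (use less.prems j in auto)
    then have "mod_le (M i j * path_sum M (U - {i}) j) (M i j * path_sum M (W - {i}) j)"
      by (rule mod_le_mult[OF mod_le_refl])
    also have "mod_le (M i j * path_sum M (W - {i}) j) ?S"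
      by (rule mod_le_sum) (use W j less.prems(2) in auto)
    also have "mod_le ?S (path_sum M W i)"
      unfolding path_sum_rec[OF W] by (rule mod_le_add_right)
    finally show ?thesis .
  qed
  have corner: "mod_le (M i 0) (path_sum M W i)"
    unfolding path_sum_rec[OF W] by (rule mod_le_add_left)
  show ?case
    unfolding path_sum_rec[OF U less.prems(3)] mod_le_add_iff by (intro conjI corner sum_mod_le step)
qed

text \<open>\<open>X\<close> collects the paths from \<open>j\<close> through \<open>i\<close>; each continues as a path from \<open>i\<close>.\<close>

lemma path_sum_remove:
  assumes "W \<subseteq> {1..<n}" "i \<in> W" "j \<in> W" "i \<noteq> j"
  shows "\<exists>X. path_sum M W j = path_sum M (W - {i}) j + X \<and> mod_le X (path_sum M W i)"
  using assms
proof (induction "card W" arbitrary: W i j rule: less_induct)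
  case less
  have W: "finite W" using less.prems finite_subset[of W "{1..<n}"] by auto
  define W' where "W' = W - {j}"
  define K where "K = W' - {i}"
  have W': "finite W'" "W' \<subseteq> {1..<n}" "i \<in> W'" "card W' < card W"
    using W less.prems card_Diff1_less[OF W less.prems(3)] unfolding W'_def by auto
  have "\<forall>k\<in>K. \<exists>X. path_sum M W' k = path_sum M K k + X \<and> mod_le X (path_sum M W' i)"
    unfolding K_def using less.hyps[OF W'(4) W'(2,3)] by blast
  then obtain X where X: "\<And>k. k \<in> K \<Longrightarrow> path_sum M W' k = path_sum M K k + X k"
    and X_le: "\<And>k. k \<in> K \<Longrightarrow> mod_le (X k) (path_sum M W' i)"
    by metis
  have i_le: "mod_le (path_sum M W' i) (path_sum M W i)"
    by (rule path_sum_mono[OF less.prems(1)]) (use W'_def W'(3) in auto)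
  have "path_sum M W j = M j 0 + (\<Sum>k\<in>W'. M j k * path_sum M W' k)"
    unfolding W'_def by (rule path_sum_rec[OF W less.prems(3)])
  also have "(\<Sum>k\<in>W'. M j k * path_sum M W' k) = M j i * path_sum M W' i + (\<Sum>k\<in>K. M j k * path_sum M W' k)"
    unfolding K_def by (rule sum.remove[OF W'(1,3)])
  also have "(\<Sum>k\<in>K. M j k * path_sum M W' k) = (\<Sum>k\<in>K. M j k * path_sum M K k) + (\<Sum>k\<in>K. M j k * X k)"
    by (simp add: X distrib_left sum.distrib)
  finally have "path_sum M W j = path_sum M (W - {i}) j + (M j i * path_sum M W' i + (\<Sum>k\<in>K. M j k * X k))"
    using path_sum_rec[of "W - {i}" j M] W less.prems
    by (simp add: K_def W'_def Diff_insert2[symmetric] insert_commute ac_simps)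
  moreover have "mod_le (M j i * path_sum M W' i + (\<Sum>k\<in>K. M j k * X k)) (path_sum M W i)"
    unfolding mod_le_add_iff
  proof (intro conjI sum_mod_le)
    have "i < n" "j < n" using less.prems by auto
    then show "mod_le (M j i * path_sum M W' i) (path_sum M W i)"
      using mod_le_trans[OF mod_le_mult_1[OF entry_mod_le_1] i_le] by blast
    fix k assume "k \<in> K"
    then have "j < n" "k < n" using less.prems W' unfolding K_def by auto
    then show "mod_le (M j k * X k) (path_sum M W i)"
      using mod_le_trans[OF mod_le_mult_1[OF entry_mod_le_1] mod_le_trans[OF X_le[OF \<open>k \<in> K\<close>] i_le]]
      by blast
  qed
  ultimately show ?case by blast
qed

lemma path_sum_fixpoint:
  assumes W: "W \<subseteq> {1..<n}" and i: "i \<in> W"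
  shows "path_sum M W i = M i 0 + (\<Sum>j\<in>W. M i j * path_sum M W j)"
proof -
  have finW: "finite W" using W finite_subset[of W "{1..<n}"] by auto
  have "\<forall>j\<in>W - {i}. \<exists>X. path_sum M W j = path_sum M (W - {i}) j + X \<and> mod_le X (path_sum M W i)"
    using path_sum_remove[OF W i] by auto
  then obtain X where X: "\<And>j. j \<in> W - {i} \<Longrightarrow> path_sum M W j = path_sum M (W - {i}) j + X j"
    and X_le: "\<And>j. j \<in> W - {i} \<Longrightarrow> mod_le (X j) (path_sum M W i)"
    by metis
  have "i < n" "0 < i" using W i by auto
  let ?R = "M i i * path_sum M W i + (\<Sum>j\<in>W - {i}. M i j * X j)"
  have "M i 0 + (\<Sum>j\<in>W. M i j * path_sum M W j)
      = M i 0 + (M i i * path_sum M W i + (\<Sum>j\<in>W - {i}. M i j * path_sum M W j))"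
    by (simp add: sum.remove[OF finW i])
  also have "(\<Sum>j\<in>W - {i}. M i j * path_sum M W j)
      = (\<Sum>j\<in>W - {i}. M i j * path_sum M (W - {i}) j) + (\<Sum>j\<in>W - {i}. M i j * X j)"
    by (simp add: X distrib_left sum.distrib)
  finally have "M i 0 + (\<Sum>j\<in>W. M i j * path_sum M W j) = path_sum M W i + ?R"
    unfolding path_sum_rec[OF finW i] by (simp add: ac_simps)
  moreover have "mod_less ?R (path_sum M W i)"
  proof (rule mod_less_add)
    show "mod_less (M i i * path_sum M W i) (path_sum M W i)"
      by (rule mod_less_mult_1[OF off_corner]) (use \<open>i < n\<close> \<open>0 < i\<close> in auto)
    show "mod_less (\<Sum>j\<in>W - {i}. M i j * X j) (path_sum M W i)"
    proof (rule sum_mod_less)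
      fix j assume j: "j \<in> W - {i}"
      then have "mod_less (M i j * X j) (X j)"
        using W \<open>i < n\<close> \<open>0 < i\<close> by (intro mod_less_mult_1[OF off_corner]) auto
      then show "mod_less (M i j * X j) (path_sum M W i)" using mod_less_le_trans X_le[OF j] by blast
    qed
  qed
  ultimately show ?thesis using mod_less_absorb by metis
qed

lemma path_sum_eq_kleene_star:
  assumes "i \<in> {1..<n}"
  shows "path_sum M {1..<n} i = kleene_star n M i 0"
proof -
  define x where "x i = (if i = 0 then 1 else path_sum M {1..<n} i)" for i
  have split0: "(\<Sum>j<n. f j) = f 0 + (\<Sum>j\<in>{1..<n}. f j)" for f :: "nat \<Rightarrow> 'g smax"
    using n_pos by (simp add: lessThan_atLeast0 atLeast0_lessThan_Suc sum.atLeast_Suc_lessThan)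
  have "x i = kleene_star n M i 0"
  proof (rule contracting_fixpoint_unique[where M = M and I = "{1..<n}" and y = "\<lambda>i. kleene_star n M i 0"])
    fix i assume i: "i \<in> {1..<n}"
    have "x i = M i 0 + (\<Sum>j\<in>{1..<n}. M i j * path_sum M {1..<n} j)"
      using path_sum_fixpoint[of "{1..<n}" i] i x_def by simp
    also have "\<dots> = (\<Sum>j<n. M i j * x j)"
      unfolding split0 x_def by simp
    finally show "mod_le (x i) (\<Sum>j<n. M i j * x j)"
      "(\<Sum>j<n. M i j * x j) = kleene_star n M i 0 \<Longrightarrow> x i = kleene_star n M i 0"
      by simp_all
    show "kleene_star n M i 0 = (\<Sum>j<n. M i j * kleene_star n M j 0)"
      using kleene_star_col0_fixpoint i by simp
  next
    fix j assume "j < n" "j \<notin> {1..<n}"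
    then have "j = 0" by simp
    then show "x j = kleene_star n M j 0" by (simp add: x_def kleene_star_corner)
  qed (use assms off_corner in auto)
  then show ?thesis using assms x_def by auto
qed

end

text \<open>\<open>B\<close> stands for \<open>\<gamma>I \<ominus> A\<close> with \<open>M = \<gamma>\<inverse>A\<close>; its entry \<open>B 0 0\<close> is left free,
  as only cofactors along row \<open>0\<close> are used.\<close>

locale char_matrix = corner_dominant n M for n :: nat and M :: "'g::linordered_ab_group_add smat" +
  fixes \<gamma> :: "'g smax" and B :: "'g smat"
  assumes diag: "\<And>r. 0 < r \<Longrightarrow> r < n \<Longrightarrow> B r r = \<gamma>"
    and off_diag: "\<And>r c. r < n \<Longrightarrow> c < n \<Longrightarrow> r \<noteq> c \<Longrightarrow> sminus (B r c) = \<gamma> * M r c"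
begin

lemma det_on_char_matrix:
  assumes U: "U \<subseteq> {1..<n}"
  shows "det_on B U = \<gamma> ^ card U"
proof (rule det_on_dominant_diagonal)
  show "finite U" using U finite_subset[of U "{1..<n}"] by auto
  fix r c assume rc: "r \<in> U" "c \<in> U"
  then show "B r r = \<gamma>" using U diag by auto
  assume "r \<noteq> c"
  moreover have "r < n" "c < n" using rc U by auto
  ultimately have "sminus (B r c) = M r c * \<gamma>" "mod_less (M r c) 1"
    using off_diag off_corner rc U by (auto simp: mult.commute)
  then have "mod_less (sminus (B r c)) \<gamma>"
    using mod_less_mult[of "M r c" 1 \<gamma> \<gamma>] by simp
  then show "mod_less (B r c) \<gamma>" by (simp add: mod_less_sminus_iff)
qed

lemma cofactor0_char_matrix:
  assumes "W \<subseteq> {1..<n}" "i \<in> W"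
  shows "cofactor0 B (insert 0 W) i = \<gamma> ^ card W * path_sum M W i"
  using assms
proof (induction "card W" arbitrary: W i rule: less_induct)
  case less
  have W: "finite W" "0 \<notin> W" using less.prems finite_subset[of W "{1..<n}"] by auto
  have i: "0 < i" "i < n" using less.prems by auto
  define k where "k = card (W - {i})"
  have card: "card W = Suc k" unfolding k_def using card_Suc_Diff1[OF W(1) less.prems(2)] by simp
  have W_i: "insert 0 W - {i} = insert 0 (W - {i})" using i by auto
  have entry: "sminus (B i j) = \<gamma> * M i j" if "j = 0 \<or> j \<in> W" "j \<noteq> i" for j
    using off_diag[of i j] that i less.prems(1) by auto
  have "cofactor0 B (insert 0 (W - {i})) 0 = det_on B (W - {i})"
    using cofactor0_0[of "insert 0 (W - {i})" B] W(2) by (simp add: insert_Diff_if)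
  also have "\<dots> = \<gamma> ^ k"
    unfolding k_def by (rule det_on_char_matrix) (use less.prems(1) in auto)
  finally have corner: "cofactor0 B (insert 0 (W - {i})) 0 = \<gamma> ^ k" .
  have rest: "cofactor0 B (insert 0 (W - {i})) j = \<gamma> ^ k * path_sum M (W - {i}) j"
    if "j \<in> W" "j \<noteq> i" for j
    unfolding k_def
    by (rule less.hyps[OF card_Diff1_less[OF W(1) less.prems(2)]]) (use less.prems that in auto)
  have "cofactor0 B (insert 0 W) i = (\<Sum>j\<in>insert 0 (W - {i}). sminus (B i j) * cofactor0 B (insert 0 (W - {i})) j)"
    using cofactor0_expand[of "insert 0 W" i B] W less.prems(2) i W_i by simp
  also have "\<dots> = sminus (B i 0) * cofactor0 B (insert 0 (W - {i})) 0
      + (\<Sum>j\<in>W - {i}. sminus (B i j) * cofactor0 B (insert 0 (W - {i})) j)"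
    using W by simp
  also have "\<dots> = \<gamma> * M i 0 * \<gamma> ^ k + (\<Sum>j\<in>W - {i}. \<gamma> * M i j * (\<gamma> ^ k * path_sum M (W - {i}) j))"
    using entry[of 0] corner i by (simp add: entry rest)
  also have "\<dots> = \<gamma> ^ Suc k * (M i 0 + (\<Sum>j\<in>W - {i}. M i j * path_sum M (W - {i}) j))"
    by (simp add: distrib_left sum_distrib_left mult_ac)
  also have "\<dots> = \<gamma> ^ card W * path_sum M W i"
    unfolding path_sum_rec[OF W(1) less.prems(2)] card ..
  finally show ?case .
qed

lemma cofactor0_eq_kleene_star:
  assumes "i < n"
  shows "cofactor0 B {..<n} i = \<gamma> ^ (n - 1) * kleene_star n M i 0"
proof -
  have n: "{..<n} = insert 0 {1..<n}" "card {1..<n} = n - 1" using n_pos by auto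
  show ?thesis
  proof (cases "i = 0")
    case True
    then show ?thesis
      using cofactor0_0[of "{..<n}" B] det_on_char_matrix[of "{1..<n}"] n(2) kleene_star_corner n_pos
      by (simp add: atLeast1_lessThan_eq_remove0)
  next
    case False
    then show ?thesis
      using cofactor0_char_matrix[of "{1..<n}" i] path_sum_eq_kleene_star[of i] assms n by simp
  qed
qed

end

section \<open>Totally positive definite matrices with a simple leading diagonal entry\<close>

lemma sless_0_imp_Pos: "sless 0 x \<Longrightarrow> x = Pos (smod x)"
  unfolding sless_def positive_def by (cases x) (auto simp: smax_defs)

lemma spreceq_Pos_imp_le: "spreceq (Pos a) (Pos b) \<Longrightarrow> a \<le> b"
  unfolding spreceq_def smax_defs by (auto split: if_splits)

lemma sprec_Pos_imp_less: "sprec (Pos a) (Pos b) \<Longrightarrow> a < b"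
  unfolding sprec_def spreceq_def smax_defs by (auto split: if_splits)

lemma mod_less_Pos_off_diagonal:
  fixes x :: "'g::linordered_ab_group_add smax"
  assumes "signed x" "sless (x\<^sup>2) (Pos a * Pos b)" "a \<le> c" "b \<le> c"
  shows "mod_less x (Pos c)"
proof -
  have "smod x + smod x < a + b" if "x \<noteq> 0"
    using assms(1,2) that unfolding sless_def positive_def signed_def power2_eq_square
    by (cases x) (auto simp: smax_defs split: if_splits)
  moreover have "a + b \<le> c + c" using add_mono[OF assms(3,4)] .
  ultimately have "smod x < c" if "x \<noteq> 0"
    using that add_mono[of c "smod x" c "smod x"] by (meson leI less_le_trans not_le)
  then show ?thesis unfolding mod_less_def by (auto simp: zero_smax_def)
qed

lemma mod_less_Pos_imp_scaled: "mod_less x (Pos c) \<Longrightarrow> mod_less (Pos (- c) * x) 1"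
  unfolding mod_less_def by (cases x) (auto simp: smax_defs algebra_simps)

lemma TPD_diag_Pos: "TPD n A \<Longrightarrow> i < n \<Longrightarrow> A i i = Pos (smod (A i i))"
  unfolding TPD_def using sless_0_imp_Pos by blast

lemma TPD_diag_less_leading:
  fixes A :: "'g::linordered_ab_group_add smat"
  assumes tpd: "TPD n A"
    and ordered: "\<forall>i. Suc i < n \<longrightarrow> spreceq (A (Suc i) (Suc i)) (A i i)"
    and simple: "1 < n \<longrightarrow> sprec (A 1 1) (A 0 0)"
    and i: "0 < i" "i < n"
  shows "smod (A i i) < smod (A 0 0)"
proof -
  have "smod (A k k) \<le> smod (A 1 1)" if "1 \<le> k" "k < n" for k
    using that
  proof (induction k rule: dec_induct)
    case (step k)
    then have "spreceq (Pos (smod (A (Suc k) (Suc k)))) (Pos (smod (A k k)))"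
      using ordered TPD_diag_Pos[OF tpd] by (metis Suc_lessD)
    then show ?case using step spreceq_Pos_imp_le by fastforce
  qed simp
  then have "smod (A i i) \<le> smod (A 1 1)" using i by simp
  moreover have "1 < n" using i by simp
  then have "smod (A 1 1) < smod (A 0 0)"
    using simple TPD_diag_Pos[OF tpd, of 0] TPD_diag_Pos[OF tpd, of 1] sprec_Pos_imp_less by force
  ultimately show ?thesis by simp
qed

lemma TPD_char_matrix:
  fixes A :: "'g::linordered_ab_group_add smat"
  assumes n_pos: "1 \<le> n" and tpd: "TPD n A"
    and ordered: "\<forall>i. Suc i < n \<longrightarrow> spreceq (A (Suc i) (Suc i)) (A i i)"
    and simple: "1 < n \<longrightarrow> sprec (A 1 1) (A 0 0)"
  shows "char_matrix n (smat_scale (sinv (A 0 0)) A) (A 0 0) (smat_minus (smat_scale (A 0 0) smat_id) A)"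
proof -
  define d where "d i = smod (A i i)" for i
  have A_diag: "A i i = Pos (d i)" if "i < n" for i
    using TPD_diag_Pos[OF tpd that] unfolding d_def .
  have d_less: "d i < d 0" if "0 < i" "i < n" for i
    using TPD_diag_less_leading[OF tpd ordered simple that] unfolding d_def .
  have d_le: "d i \<le> d 0" if "i < n" for i
    using d_less[of i] that by (cases "i = 0") auto
  have A00: "A 0 0 = Pos (d 0)" using A_diag n_pos by simp
  show ?thesis
  proof unfold_locales
    show "smat_scale (sinv (A 0 0)) A 0 0 = 1"
      by (simp add: smat_scale_def A00 Pos_0_eq_1)
    fix i j assume ij: "i < n" "j < n"
    have "mod_less (A i j) (Pos (d 0))" if "(i, j) \<noteq> (0, 0)"
    proof (cases "i = j")
      case True
      then show ?thesis using ij that d_less[of i] A_diag[of i] by (simp add: mod_less_def)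
    next
      case False
      then have "signed (A i j)" "sless ((A i j)\<^sup>2) (Pos (d i) * Pos (d j))"
        using tpd ij A_diag unfolding TPD_def by auto
      then show ?thesis using mod_less_Pos_off_diagonal d_le ij by blast
    qed
    then show "(i, j) \<noteq> (0, 0) \<Longrightarrow> mod_less (smat_scale (sinv (A 0 0)) A i j) 1"
      by (simp add: smat_scale_def A00 mod_less_Pos_imp_scaled)
    show "i \<noteq> j \<Longrightarrow> sminus (smat_minus (smat_scale (A 0 0) smat_id) A i j)
        = A 0 0 * smat_scale (sinv (A 0 0)) A i j"
      by (simp add: smat_minus_def smat_scale_def smat_id_def A00 Pos_0_eq_1 flip: mult.assoc)
  next
    fix r assume "0 < r" "r < n"
    then show "smat_minus (smat_scale (A 0 0) smat_id) A r r = A 0 0"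
      using d_less[of r] A_diag[of r] by (simp add: smat_minus_def smat_scale_def smat_id_def A00 smax_defs)
  qed (rule n_pos)
qed

lemma smat_vec_scale: "smat_vec n (smat_scale c M) v i = c * smat_vec n M v i"
  by (simp add: smat_vec_def smat_scale_def sum_distrib_left mult.assoc)

lemma smat_scale_sinv_Pos: "smat_scale (Pos g) (smat_scale (sinv (Pos g)) A) = A"
  by (intro ext) (simp add: smat_scale_def mult.assoc[symmetric] Pos_0_eq_1)

lemma is_eigenvector_scaled_nabla:
  assumes "is_eigenvector n (smat_scale (Pos g) M) (Pos g) w" "i < n"
  shows "nabla (w i) (\<Sum>j<n. M i j * w j)"
proof -
  have "nabla (Pos g * smat_vec n M w i) (Pos g * w i)"
    using assms unfolding is_eigenvector_def by (simp add: smat_vec_scale)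
  then have "nabla (sinv (Pos g) * (Pos g * smat_vec n M w i)) (sinv (Pos g) * (Pos g * w i))"
    by (rule nabla_mult)
  then have "nabla (\<Sum>j<n. M i j * w j) (w i)"
    by (simp add: smat_vec_def mult.assoc[symmetric] Pos_0_eq_1)
  then show ?thesis by (rule nabla_sym)
qed

context corner_dominant
begin

lemma scaled_star_col0_strong_eigenvector:
  assumes v: "\<And>i. i < n \<Longrightarrow> v i = c * kleene_star n M i 0" and "i < n"
  shows "smat_vec n (smat_scale g M) v i = g * v i"
proof -
  have "smat_vec n M v i = c * (\<Sum>j<n. M i j * kleene_star n M j 0)"
    unfolding smat_vec_def by (simp add: v sum_distrib_left ac_simps)
  then show ?thesis
    using kleene_star_col0_fixpoint[OF \<open>i < n\<close>] v[OF \<open>i < n\<close>] by (simp add: smat_vec_scale)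
qed

lemma scaled_star_col0_eigenvector:
  assumes v: "\<And>i. i < n \<Longrightarrow> v i = Pos h * kleene_star n M i 0" and "\<forall>i<n. signed (v i)"
  shows "is_eigenvector n (smat_scale g M) g v \<and> is_strong_eigenvector n (smat_scale g M) g v"
proof -
  have "v 0 \<noteq> 0" using v[of 0] n_pos by (simp add: kleene_star_corner)
  then have "is_svec n v" using assms(2) n_pos unfolding is_svec_def by (auto intro: exI[of _ 0])
  then show ?thesis
    using scaled_star_col0_strong_eigenvector[OF v]
    unfolding is_eigenvector_def is_strong_eigenvector_def by (simp add: nabla_refl)
qed

lemma signed_solution_eq_star_col0:
  assumes w_signed: "\<And>i. i < n \<Longrightarrow> signed (w i)"
    and w_nabla: "\<And>i. 0 < i \<Longrightarrow> i < n \<Longrightarrow> nabla (w i) (\<Sum>j<n. M i j * w j)"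
    and star_signed: "\<And>i. i < n \<Longrightarrow> signed (kleene_star n M i 0)"
    and "i < n"
  shows "w i = w 0 * kleene_star n M i 0"
proof (cases "i = 0")
  case False
  show ?thesis
  proof (rule contracting_fixpoint_unique[where M = M and I = "{1..<n}" and y = "\<lambda>i. w 0 * kleene_star n M i 0"])
    fix i assume i: "i \<in> {1..<n}"
    then show "w 0 * kleene_star n M i 0 = (\<Sum>j<n. M i j * (w 0 * kleene_star n M j 0))"
      using kleene_star_col0_fixpoint[of i]
      by (simp add: mult.left_commute[of "M i _" "w 0"] flip: sum_distrib_left)
    have "0 < i" "i < n" using i by auto
    then show "mod_le (w i) (\<Sum>j<n. M i j * w j)"
      using signed_nabla_mod_le[of "w i"] w_signed w_nabla by (cases "w i = 0") auto
    show "w i = w 0 * kleene_star n M i 0" if "(\<Sum>j<n. M i j * w j) = w 0 * kleene_star n M i 0"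
    proof (rule signed_nabla_eq)
      show "signed (w i)" "signed (w 0 * kleene_star n M i 0)"
        using signed_mult w_signed star_signed n_pos \<open>i < n\<close> by auto
      show "nabla (w i) (w 0 * kleene_star n M i 0)"
        using w_nabla[OF \<open>0 < i\<close> \<open>i < n\<close>] that by simp
    qed
  next
    fix j assume "j < n" "j \<notin> {1..<n}"
    then have "j = 0" by simp
    then show "w j = w 0 * kleene_star n M j 0" by (simp add: kleene_star_corner)
  qed (use \<open>i < n\<close> False off_corner in auto)
qed (simp add: kleene_star_corner)

lemma scaled_star_col0_unique:
  assumes v: "\<And>i. i < n \<Longrightarrow> v i = Pos h * kleene_star n M i 0"
    and v_signed: "\<And>i. i < n \<Longrightarrow> signed (v i)"
    and w: "is_eigenvector n (smat_scale (Pos g) M) (Pos g) w"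
  shows "\<exists>c. signed c \<and> c \<noteq> 0 \<and> (\<forall>i<n. w i = c * v i)"
proof -
  have w_signed: "signed (w i)" if "i < n" for i
    using w that unfolding is_eigenvector_def is_svec_def by auto
  have star_signed: "signed (kleene_star n M i 0)" if "i < n" for i
    using v_signed[OF that] v[OF that] signed_Pos_mult_iff by metis
  have w_eq: "w i = w 0 * kleene_star n M i 0" if "i < n" for i
    by (rule signed_solution_eq_star_col0)
      (use w_signed is_eigenvector_scaled_nabla[OF w] star_signed that in auto)
  then have "w 0 \<noteq> 0"
    using w unfolding is_eigenvector_def is_svec_def by force
  then have "w 0 * Pos (- h) \<noteq> 0" by simp
  moreover have "signed (w 0 * Pos (- h))"
    using w_signed[of 0] n_pos by (simp add: signed_mult)
  moreover have "w i = w 0 * Pos (- h) * v i" if "i < n" for i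
  proof -
    have "w 0 * Pos (- h) * v i = w 0 * (Pos (- h) * Pos h) * kleene_star n M i 0"
      by (simp only: v[OF that] mult.assoc)
    also have "\<dots> = w i" using w_eq[OF that] by (simp add: Pos_0_eq_1)
    finally show ?thesis by simp
  qed
  ultimately show ?thesis by blast
qed

end

theorem theorem5p11:
  fixes A :: "'g::linordered_ab_group_add smat" and n :: nat
  assumes divisible: "\<And>(x::'g) (m::nat). 0 < m \<Longrightarrow> \<exists>y. (\<Sum>i<m. y) = x"
    and n_pos: "1 \<le> n"
    and tpd: "TPD n A"
    and ordered: "\<forall>i. Suc i < n \<longrightarrow> spreceq (A (Suc i) (Suc i)) (A i i)"
    and simple: "1 < n \<longrightarrow> sprec (A 1 1) (A 0 0)"
  defines "\<gamma> \<equiv> A 0 0"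
    and "v1 \<equiv> (\<lambda>i. sadj n (smat_minus (smat_scale (A 0 0) smat_id) A) i 0)"
  shows "kleene_converges n (smat_scale (sinv \<gamma>) A)
       \<and> (\<forall>i<n. v1 i = \<gamma> ^ (n - 1) * kleene_star n (smat_scale (sinv \<gamma>) A) i 0)
       \<and> (\<forall>i<n. smat_vec n A v1 i = \<gamma> * v1 i)
       \<and> ((\<forall>i<n. signed (v1 i)) \<longrightarrow>
            is_eigenvector n A \<gamma> v1 \<and> is_strong_eigenvector n A \<gamma> v1 \<and>
            (\<forall>w. is_eigenvector n A \<gamma> w \<longrightarrow>
                 (\<exists>c. signed c \<and> c \<noteq> 0 \<and> (\<forall>i<n. w i = c * v1 i))))"
proof -
  define M where "M = smat_scale (sinv \<gamma>) A"
  define B where "B = smat_minus (smat_scale \<gamma> smat_id) A"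
  interpret char_matrix n M \<gamma> B
    unfolding M_def B_def \<gamma>_def by (rule TPD_char_matrix[OF n_pos tpd ordered simple])
  obtain g where \<gamma>: "\<gamma> = Pos g"
    using TPD_diag_Pos[OF tpd, of 0] n_pos unfolding \<gamma>_def by auto
  obtain h where h: "\<gamma> ^ (n - 1) = Pos h"
    unfolding \<gamma> power_Pos by blast
  have A: "A = smat_scale (Pos g) M"
    unfolding M_def \<gamma> by (rule smat_scale_sinv_Pos[symmetric])
  have v1: "v1 i = Pos h * kleene_star n M i 0" if "i < n" for i
    using that unfolding v1_def \<gamma>_def[symmetric] B_def[symmetric] h[symmetric]
    by (simp add: sadj_col0_eq_cofactor0 cofactor0_eq_kleene_star)
  show ?thesis
  proof (intro conjI impI)
    show "kleene_converges n (smat_scale (sinv \<gamma>) A)"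
      using kleene_converges unfolding M_def .
    show "\<forall>i<n. v1 i = \<gamma> ^ (n - 1) * kleene_star n (smat_scale (sinv \<gamma>) A) i 0"
      using v1 h unfolding M_def by simp
    show "\<forall>i<n. smat_vec n A v1 i = \<gamma> * v1 i"
      unfolding A \<gamma> using scaled_star_col0_strong_eigenvector[OF v1] by blast
    assume "\<forall>i<n. signed (v1 i)"
    then show "is_eigenvector n A \<gamma> v1" "is_strong_eigenvector n A \<gamma> v1"
      "\<forall>w. is_eigenvector n A \<gamma> w \<longrightarrow> (\<exists>c. signed c \<and> c \<noteq> 0 \<and> (\<forall>i<n. w i = c * v1 i))"
      using scaled_star_col0_eigenvector[OF v1] scaled_star_col0_unique[OF v1] unfolding A \<gamma> by auto
  qed
qed

end
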